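(* Fix $d\ge 2$, $p\in(0,1)$, $v>0$ and $r$ with $$0<r<\frac{1}{2^{2d-1}}\,\frac{p}{1+(2d-2)(1-p)}.$$ Then there exists $\lambda_0>0$ such that for every $\lambda\ge\lambda_0$ and every $(y,z)\in\vec{\mathbb{E}}_d^s$, $$\mathbb{P}(\underline\zeta_{(y,z)}=1)\ge r.$$
   Context: Let $\mathbb{E}_d$ (resp. $\vec{\mathbb{E}}_d$) be the set of unoriented (resp. oriented) nearest-neighbour edges of $\mathbb{Z}^d$, and $\mathcal N(x)$ the set of the $2d$ neighbours of $x$. Let $e_1$ be the first unit vector, and set $$\vec{\mathbb{E}}_d^s=\{(x,x+e_1): x\in(1+4\mathbb{Z})^d\}\cup\{(x+e_1,x): x\in(1+4\mathbb{Z})^d\}.$$ Given $p,v,\lambda$, consider the following families. All families are independent of each other, and within each family the variables are i.i.d.: - $(T^+_e)_{e\in\mathbb{E}_d}$ with law $\mathrm{Exp}(vp)$; - $(T^-_e)_{e\in\mathbb{E}_d}$ with law $\mathrm{Exp}(v(1-p))$; - $(X_x)_{x\in\mathbb{Z}^d}$ and $(X'_x)_{x\in\mathbb{Z}^d}$ with law $\mathrm{Exp}(1)$; - $(X_{(x,y)})_{(x,y)\in\vec{\mathbb{E}}_d}$ with law $\mathrm{Exp}(\lambda)$; - $(\chi_x)_{x\in\mathbb{Z}^d}$, Poisson point processes on $[0,\infty)$ of intensity $1$; - $(\chi_{\{x,y\}})_{\{x,y\}\in\mathbb{E}_d}$, Poisson point processes of intensity $\lambda$. For $(x,y)\in\vec{\mathbb{E}}_d$,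 the process $(\tilde\eta^{x,y}_t)_{t\ge0}$ of subsets of $\{x,y\}$ is defined as follows. - If $X_{(x,y)}<X_x$, it is the contact process on the two-vertex graph $\{x,y\}$ started from $\{x,y\}$, built by graphical construction. An infected site becomes healthy at each of its recovery marks; at each infection mark, if one endpoint is infected, the other becomes infected. The recovery marks of $x$ are $\{X_x-X_{(x,y)}\}\cup(X_x-X_{(x,y)}+\chi_x)$, the recovery marks of $y$ are $\{X_y\}\cup(X_y+\chi_y)$, and the infection marks are $\chi_{\{x,y\}}$. - If $X_{(x,y)}>X_x$, it is identically empty. For $(y,z)\in\vec{\mathbb{E}}_d^s$ and $x\in\mathcal N(y)\setminus\{z\}$, define $$\zeta^x_{(y,z)}=\mathbf 1_{T^+_{\{y,z\}}<X_y}\mathbf 1_{X_{(y,z)}<\min(X_y-T^+_{\{y,z\}},T^-_{\{y,z\}})}+\mathbf 1_{X_y<T^+_{\{y,z\}}}\mathbf 1_{T^+_{\{y,z\}}<T^-_{\{x,y\}}-X_{(x,y)}}\mathbf 1_{y\in\tilde\eta^{x,y}_{T^+_{\{y,z\}}}}\mathbf 1_{X_{(y,z)}<\min(X'_y,T^-_{\{y,z\}})}$$ and $$\underline\zeta_{(y,z)}=\prod_{x\in\mathcal N(y)\setminus\{z\}}\zeta^x_{(y,z)}.$$ The dependence of these objects on $\lambda$ enters through the laws of $X_{(x,y)}$ and $\chi_{\{x,y\}}$. *)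

theory Defs
  imports "HOL-Probability.Probability"
begin

(* Sites of Z^d are integer lists of length d; unoriented edges {x,y} are
   two-element sets of sites; oriented edges are pairs. *)
type_synonym site = "int list"

definition sites :: "nat \<Rightarrow> site set" where
  "sites d = {x. length x = d}"

definition nbrs :: "nat \<Rightarrow> site \<Rightarrow> site set" where
  "nbrs d x = {y. length y = d \<and> length x = d \<and>
                  (\<Sum>i<d. \<bar>x ! i - y ! i\<bar>) = 1}"

definition e1 :: "nat \<Rightarrow> site" where
  "e1 d = map (\<lambda>i. if i = 0 then 1 else 0) [0..<d]"

definition addv :: "site \<Rightarrow> site \<Rightarrow> site" where
  "addv x y = map2 (+) x y"

definition lattice4 :: "nat \<Rightarrow> site set" where
  "lattice4 d = {x. length x = d \<and> (\<forall>i<d. x ! i mod 4 = 1)}"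

definition Es :: "nat \<Rightarrow> (site \<times> site) set" where
  "Es d = {(x, addv x (e1 d)) | x. x \<in> lattice4 d} \<union> {(addv x (e1 d), x) | x. x \<in> lattice4 d}"

(* Index set of all the random variables.  A Poisson point process is encoded by
   its i.i.d. exponential inter-arrival times (indexed by nat). *)
datatype idx =
    Tp "site set"
  | Tm "site set"
  | Xs site
  | Xs' site
  | Xo "site \<times> site"
  | Cs site nat
  | Ce "site set" nat

fun rate :: "real \<Rightarrow> real \<Rightarrow> real \<Rightarrow> idx \<Rightarrow> real" where
  "rate p v lam (Tp e) = v * p"
| "rate p v lam (Tm e) = v * (1 - p)"
| "rate p v lam (Xs x) = 1"
| "rate p v lam (Xs' x) = 1"
| "rate p v lam (Xo xy) = lam"
| "rate p v lam (Cs x n) = 1"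
| "rate p v lam (Ce e n) = lam"

definition model :: "real \<Rightarrow> real \<Rightarrow> real \<Rightarrow> (idx \<Rightarrow> real) measure" where
  "model p v lam = PiM UNIV (\<lambda>i. density lborel (exponential_density (rate p v lam i)))"

definition ppp :: "(nat \<Rightarrow> real) \<Rightarrow> real set" where
  "ppp E = {(\<Sum>k\<le>n. E k) | n. True}"

definition chi_s :: "(idx \<Rightarrow> real) \<Rightarrow> site \<Rightarrow> real set" where
  "chi_s \<omega> x = ppp (\<lambda>k. \<omega> (Cs x k))"

definition chi_e :: "(idx \<Rightarrow> real) \<Rightarrow> site set \<Rightarrow> real set" where
  "chi_e \<omega> e = ppp (\<lambda>k. \<omega> (Ce e k))"

definition other :: "'s \<Rightarrow> 's \<Rightarrow> 's \<Rightarrow> 's" where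
  "other a b u = (if u = a then b else a)"

(* Graphical construction of the contact process on the two-vertex graph {a,b}:
   infection_path rec infm a b u s ss t w  means: an infection path sitting at u at
   time s, jumping to the other vertex at the successive infection marks ss
   (strictly increasing, in inf), not meeting any recovery mark of the vertex
   it sits on, and reaching w at time t. *)
fun infection_path :: "('s \<Rightarrow> real set) \<Rightarrow> real set \<Rightarrow> 's \<Rightarrow> 's \<Rightarrow> 's \<Rightarrow> real \<Rightarrow> real list \<Rightarrow> real \<Rightarrow> 's \<Rightarrow> bool" where
  "infection_path rec infm a b u s [] t w = (s \<le> t \<and> rec u \<inter> {s<..t} = {} \<and> u = w)"
| "infection_path rec infm a b u s (s' # ss) t w =
     (s < s' \<and> s' \<in> infm \<and> rec u \<inter> {s<..s'} = {} \<and>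
      infection_path rec infm a b (other a b u) s' ss t w)"

definition cp2 :: "('s \<Rightarrow> real set) \<Rightarrow> real set \<Rightarrow> 's \<Rightarrow> 's \<Rightarrow> real \<Rightarrow> 's set" where
  "cp2 rec infm a b t = {w. \<exists>u\<in>{a,b}. \<exists>ss. infection_path rec infm a b u 0 ss t w}"

definition eta :: "(idx \<Rightarrow> real) \<Rightarrow> site \<Rightarrow> site \<Rightarrow> real \<Rightarrow> site set" where
  "eta \<omega> x y t =
    (if \<omega> (Xo (x, y)) < \<omega> (Xs x) then
       cp2 (\<lambda>u. if u = x then
                   {\<omega> (Xs x) - \<omega> (Xo (x, y))} \<union> ((\<lambda>s. \<omega> (Xs x) - \<omega> (Xo (x, y)) + s) ` chi_s \<omega> x)
                 else {\<omega> (Xs y)} \<union> ((\<lambda>s. \<omega> (Xs y) + s) ` chi_s \<omega> y))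
           (chi_e \<omega> {x, y}) x y t
     else {})"

definition ind :: "bool \<Rightarrow> real" where
  "ind b = (if b then 1 else 0)"

definition zeta :: "(idx \<Rightarrow> real) \<Rightarrow> site \<Rightarrow> site \<Rightarrow> site \<Rightarrow> real" where
  "zeta \<omega> x y z =
     (let Tpyz = \<omega> (Tp {y, z}); Tmyz = \<omega> (Tm {y, z}); Xy = \<omega> (Xs y);
          Xyz = \<omega> (Xo (y, z)) in
      ind (Tpyz < Xy) * ind (Xyz < min (Xy - Tpyz) Tmyz)
      + ind (Xy < Tpyz) * ind (Tpyz < \<omega> (Tm {x, y}) - \<omega> (Xo (x, y)))
        * ind (y \<in> eta \<omega> x y Tpyz) * ind (Xyz < min (\<omega> (Xs' y)) Tmyz))"

definition zeta_under :: "nat \<Rightarrow> (idx \<Rightarrow> real) \<Rightarrow> site \<Rightarrow> site \<Rightarrow> real" where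
  "zeta_under d \<omega> y z = (\<Prod>x\<in>nbrs d y - {z}. zeta \<omega> x y z)"

end

theory Submission
  imports Defs "HOL-Real_Asymp.Real_Asymp"
begin

(* The event zeta = 1 is realised in two disjoint ways. Either T+_yz rings well before X_y, which has
   probability close to a / (a + 1) with a = v p; or X_y rings first and T+_yz still precedes every
   T-_xy, x in N(y) - {z}, which has probability close to a / (a + b) - a / (a + b + 1) with
   b = v (1 - p) |N(y) - {z}|. In the second case y must also be infected at time T+_yz in the two-site
   contact process of every edge {x, y}. This holds deterministically as soon as, up to a horizon K, the
   infection marks are delta-dense while the recovery marks come after delta, are pairwise 2 delta apart
   and delta away from T+_yz: after each recovery an infection crosses the edge before the next recovery.
   For large lambda the infection marks are dense with high probability, and by anti-concentration of
   exponential variables the separation fails with probability O(delta). Discretising T+_yz on a mesh h,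
   then letting h tend to 0 and choosing the horizon, the number of recovery marks, delta and finally
   lambda_0, the probability gets arbitrarily close to the limit above, which exceeds the threshold of
   the statement because |N(y)| <= 3^d. *)

section \<open>The contact process on two sites\<close>

lemma infection_path_extend:
  "infection_path rec infm a b u s ss t w \<Longrightarrow> t \<le> t' \<Longrightarrow> rec w \<inter> {t<..t'} = {}
   \<Longrightarrow> infection_path rec infm a b u s ss t' w"
proof (induction ss arbitrary: u s)
  case Nil
  then have "{s<..t'} = {s<..t} \<union> {t<..t'}" by auto
  with Nil show ?case by auto
qed auto

lemma infection_path_snoc:
  "infection_path rec infm a b u s ss t w \<Longrightarrow> t < m \<Longrightarrow> m \<in> infm \<Longrightarrow> rec w \<inter> {t<..m} = {}
   \<Longrightarrow> infection_path rec infm a b u s (ss @ [m]) m (other a b w)"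
proof (induction ss arbitrary: u s)
  case Nil
  then have "{s<..m} = {s<..t} \<union> {t<..m}" by auto
  with Nil show ?case by auto
qed auto

lemma infection_path_marks_subset: "infection_path rec infm a b u s ss t w \<Longrightarrow> set ss \<subseteq> infm"
  by (induction ss arbitrary: u s) auto

lemma cp2_extend:
  assumes "w \<in> cp2 rec infm a b t" "t \<le> t'" "rec w \<inter> {t<..t'} = {}"
  shows "w \<in> cp2 rec infm a b t'"
proof -
  obtain u ss where u: "u \<in> {a, b}" and "infection_path rec infm a b u 0 ss t w"
    using assms(1) by (auto simp: cp2_def)
  then have "infection_path rec infm a b u 0 ss t' w"
    using infection_path_extend[of rec infm a b u 0 ss t w t'] assms(2,3) by blast
  with u show ?thesis by (auto simp: cp2_def)
qed

lemma cp2_jump: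
  assumes "w \<in> cp2 rec infm a b t" "t < m" "m \<in> infm" "rec w \<inter> {t<..m} = {}"
  shows "other a b w \<in> cp2 rec infm a b m"
proof -
  obtain u ss where u: "u \<in> {a, b}" and "infection_path rec infm a b u 0 ss t w"
    using assms(1) by (auto simp: cp2_def)
  then have "infection_path rec infm a b u 0 (ss @ [m]) m (other a b w)"
    using infection_path_snoc[of rec infm a b u 0 ss t w m] assms(2-4) by blast
  with u show ?thesis by (auto simp: cp2_def)
qed

lemma cp2_initial: "w \<in> {a, b} \<Longrightarrow> 0 \<le> t \<Longrightarrow> rec w \<inter> {0<..t} = {} \<Longrightarrow> w \<in> cp2 rec infm a b t"
  unfolding cp2_def by (auto intro!: exI[of _ "[]"])

lemma real_nonneg_step_induct:
  fixes \<delta> :: real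
  assumes "0 < \<delta>"
    and step: "\<And>t. 0 \<le> t \<Longrightarrow> (\<And>s. 0 \<le> s \<Longrightarrow> s \<le> t - \<delta> \<Longrightarrow> P s) \<Longrightarrow> P t"
    and "0 \<le> t"
  shows "P t"
proof -
  have "\<forall>t. 0 \<le> t \<and> t < real n * \<delta> \<longrightarrow> P t" for n
  proof (induction n)
    case 0
    show ?case by auto
  next
    case (Suc n)
    have "P t" if "0 \<le> t" "t < real (Suc n) * \<delta>" for t
    proof (rule step[OF that(1)])
      fix s assume "0 \<le> s" "s \<le> t - \<delta>"
      with that(2) have "s < real n * \<delta>" by (simp add: algebra_simps)
      with Suc.IH \<open>0 \<le> s\<close> show "P s" by blast
    qed
    then show ?case by blast
  qed
  moreover obtain n :: nat where "t < real n * \<delta>"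
    using reals_Archimedean3[OF \<open>0 < \<delta>\<close>] by blast
  ultimately show ?thesis using \<open>0 \<le> t\<close> by blast
qed

locale two_site_marks =
  fixes rec :: "'s \<Rightarrow> real set" and infm :: "real set" and a b :: 's and \<delta> K :: real
  assumes sites_distinct: "a \<noteq> b" and delta_pos: "0 < \<delta>"
    and dense_infection: "\<And>s. 0 \<le> s \<Longrightarrow> s \<le> K \<Longrightarrow> \<exists>m\<in>infm. s < m \<and> m \<le> s + \<delta>"
    and late_recovery: "\<And>w r. w \<in> {a, b} \<Longrightarrow> r \<in> rec w \<Longrightarrow> r \<le> K \<Longrightarrow> \<delta> < r"
    and separated_recovery: "\<And>w w' r r'. w \<in> {a, b} \<Longrightarrow> w' \<in> {a, b} \<Longrightarrow> r \<in> rec w \<Longrightarrow> r' \<in> rec w'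
          \<Longrightarrow> r \<le> K \<Longrightarrow> r' \<le> K \<Longrightarrow> (w, r) \<noteq> (w', r') \<Longrightarrow> 2 * \<delta> \<le> \<bar>r - r'\<bar>"
begin

abbreviation infected :: "real \<Rightarrow> 's set" where
  "infected t \<equiv> cp2 rec infm a b t"

definition recovers_in :: "'s \<Rightarrow> real \<Rightarrow> real \<Rightarrow> bool" where
  "recovers_in w s t \<longleftrightarrow> rec w \<inter> {s<..t} \<noteq> {}"

definition survival_invariant :: "real \<Rightarrow> bool" where
  "survival_invariant t \<longleftrightarrow>
     ((\<forall>w\<in>{a, b}. \<not> recovers_in w (t - \<delta>) t) \<longrightarrow> a \<in> infected t \<and> b \<in> infected t) \<and>
     (\<forall>w\<in>{a, b}. recovers_in w (t - \<delta>) t \<longrightarrow> other a b w \<in> infected t)"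

lemma other_in_sites: "w \<in> {a, b} \<Longrightarrow> other a b w \<in> {a, b} \<and> other a b w \<noteq> w"
  using sites_distinct by (auto simp: other_def)

lemma infected_extend:
  "w \<in> infected t \<Longrightarrow> t \<le> t' \<Longrightarrow> \<not> recovers_in w t t' \<Longrightarrow> w \<in> infected t'"
  using cp2_extend[of w rec infm a b t t'] unfolding recovers_in_def by blast

lemma infected_jump:
  "w \<in> infected t \<Longrightarrow> t < m \<Longrightarrow> m \<in> infm \<Longrightarrow> \<not> recovers_in w t m \<Longrightarrow> other a b w \<in> infected m"
  using cp2_jump[of w rec infm a b t m] unfolding recovers_in_def by blast

lemma recovers_in_mono: "recovers_in w s t \<Longrightarrow> s' \<le> s \<Longrightarrow> t \<le> t' \<Longrightarrow> recovers_in w s' t'"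
  unfolding recovers_in_def by fastforce

lemma survival_invariant_infected:
  assumes "survival_invariant t"
  obtains w where "w \<in> {a, b}" "w \<in> infected t"
  using assms other_in_sites unfolding survival_invariant_def by blast

lemma both_infected_without_recovery:
  assumes t: "0 \<le> t" "t \<le> K"
    and quiet: "\<forall>w\<in>{a, b}. \<not> recovers_in w (t - \<delta>) t"
    and IH: "\<And>s. 0 \<le> s \<Longrightarrow> s \<le> t - \<delta> \<Longrightarrow> survival_invariant s"
  shows "a \<in> infected t \<and> b \<in> infected t"
proof (cases "t \<le> \<delta>")
  case True
  have "\<not> recovers_in w 0 t" if "w \<in> {a, b}" for w
    using late_recovery[OF that] t True unfolding recovers_in_def by force
  then show ?thesis
    using t(1) cp2_initial[of _ a b t rec infm] unfolding recovers_in_def by blast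
next
  case False
  define s where "s = t - \<delta>"
  have s: "0 \<le> s" "s \<le> K" "s \<le> t" using False t delta_pos unfolding s_def by auto
  obtain w where w: "w \<in> {a, b}" "w \<in> infected s"
    using survival_invariant_infected IH s unfolding s_def by blast
  obtain m where m: "m \<in> infm" "s < m" "m \<le> t"
    using dense_infection[OF s(1,2)] unfolding s_def by auto
  have quiet': "\<not> recovers_in w' s' t'" if "w' \<in> {a, b}" "s \<le> s'" "t' \<le> t" for w' s' t'
    using quiet that recovers_in_mono unfolding s_def by blast
  have "w \<in> infected t"
    using infected_extend[OF w(2) s(3)] quiet' w(1) by simp
  moreover have "other a b w \<in> infected m"
    using infected_jump[OF w(2) m(2,1)] quiet' w(1) m by simp
  then have "other a b w \<in> infected t"
    using infected_extend[OF _ m(3)] quiet' other_in_sites[OF w(1)] m by simp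
  ultimately show ?thesis using w(1) other_in_sites[OF w(1)] by auto
qed

lemma partner_infected_after_recovery:
  assumes t: "0 \<le> t" "t \<le> K" and w: "w \<in> {a, b}" and rec_w: "recovers_in w (t - \<delta>) t"
    and IH: "\<And>s. 0 \<le> s \<Longrightarrow> s \<le> t - \<delta> \<Longrightarrow> survival_invariant s"
  shows "other a b w \<in> infected t"
proof -
  obtain r where r: "r \<in> rec w" "t - \<delta> < r" "r \<le> t"
    using rec_w unfolding recovers_in_def by auto
  have rK: "r \<le> K" using r(3) t(2) by linarith
  define s where "s = r - \<delta>"
  have s: "0 \<le> s" "s \<le> t - \<delta>" "s \<le> t"
    using late_recovery[OF w r(1) rK] r delta_pos unfolding s_def by auto
  have far: "r' \<le> r - 2 * \<delta> \<or> r + 2 * \<delta> \<le> r'"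
    if "w' \<in> {a, b}" "r' \<in> rec w'" "(w', r') \<noteq> (w, r)" "r' \<le> K" for w' r'
    using separated_recovery[OF that(1) w that(2) r(1) that(4) rK that(3)] by linarith
  have quiet: "\<not> recovers_in w' (s - \<delta>) s" if w': "w' \<in> {a, b}" for w'
  proof
    assume "recovers_in w' (s - \<delta>) s"
    then obtain r' where r': "r' \<in> rec w'" "s - \<delta> < r'" "r' \<le> s"
      by (auto simp: recovers_in_def)
    moreover have "(w', r') \<noteq> (w, r)" using r'(3) delta_pos unfolding s_def by auto
    moreover have "r' \<le> K" using r'(3) s(3) t(2) by simp
    ultimately show False using far[OF w'] unfolding s_def by fastforce
  qed
  have "a \<in> infected s \<and> b \<in> infected s"
    using IH[OF s(1,2)] quiet unfolding survival_invariant_def by auto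
  then have "other a b w \<in> infected s"
    using other_in_sites[OF w] by auto
  moreover have "\<not> recovers_in (other a b w) s t"
  proof
    assume "recovers_in (other a b w) s t"
    then obtain r' where r': "r' \<in> rec (other a b w)" "s < r'" "r' \<le> t"
      unfolding recovers_in_def by auto
    moreover have "(other a b w, r') \<noteq> (w, r)" using other_in_sites[OF w] by auto
    moreover have "r' \<le> K" using r'(3) t(2) by simp
    ultimately show False
      using far[of "other a b w" r'] other_in_sites[OF w] r(2) unfolding s_def by fastforce
  qed
  ultimately show ?thesis using infected_extend[OF _ s(3)] by blast
qed

lemma survival_invariant_holds:
  assumes "0 \<le> t" "t \<le> K"
  shows "survival_invariant t"
proof -
  have "t \<le> K \<longrightarrow> survival_invariant t"
  proof (rule real_nonneg_step_induct[OF delta_pos _ assms(1)])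
    fix t assume t: "0 \<le> t" and IH: "\<And>s. 0 \<le> s \<Longrightarrow> s \<le> t - \<delta> \<Longrightarrow> s \<le> K \<longrightarrow> survival_invariant s"
    show "t \<le> K \<longrightarrow> survival_invariant t"
    proof
      assume tK: "t \<le> K"
      then have IH': "survival_invariant s" if "0 \<le> s" "s \<le> t - \<delta>" for s
        using IH[OF that] that(2) delta_pos by simp
      show "survival_invariant t"
        unfolding survival_invariant_def
        using both_infected_without_recovery[OF t tK _ IH'] partner_infected_after_recovery[OF t tK _ _ IH']
        by blast
    qed
  qed
  with assms(2) show ?thesis by simp
qed

theorem survives:
  assumes "0 \<le> t" "t \<le> K" and "\<not> recovers_in b (t - \<delta>) t"
  shows "b \<in> infected t"
  using survival_invariant_holds[OF assms(1,2)] assms(3) other_in_sites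
  unfolding survival_invariant_def by (auto simp: other_def)

end

lemma ppp_eq_range: "ppp E = range (\<lambda>n. \<Sum>k\<le>n. E k)"
  unfolding ppp_def by auto

definition arrival :: "real \<Rightarrow> (nat \<Rightarrow> real) \<Rightarrow> nat \<Rightarrow> real" where
  "arrival c C n = c + (\<Sum>k<n. C k)"

lemma shifted_ppp_eq_range_arrival: "insert c ((+) c ` ppp C) = range (arrival c C)"
proof -
  have "range (arrival c C) = insert (arrival c C 0) (range (\<lambda>n. arrival c C (Suc n)))"
    by (metis UNIV_nat_eq image_image image_insert)
  then show ?thesis
    by (simp add: ppp_eq_range arrival_def lessThan_Suc_atMost image_image)
qed

lemma arrival_mono: "(\<And>k. 0 \<le> C k) \<Longrightarrow> n \<le> m \<Longrightarrow> arrival c C n \<le> arrival c C m"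
  unfolding arrival_def by (auto intro!: sum_mono2)

lemma arrival_ge_start: "(\<And>k. 0 \<le> C k) \<Longrightarrow> c \<le> arrival c C n"
  using arrival_mono[of C 0 n c] by (simp add: arrival_def)

lemma arrival_Suc: "arrival c C (Suc n) = arrival c C n + C n"
  by (simp add: arrival_def)

lemma arrival_gap:
  assumes "\<And>k. 0 \<le> C k" "n < m"
  shows "C n \<le> arrival c C m - arrival c C n"
  using arrival_mono[of C "Suc n" m c] assms by (simp add: arrival_Suc)

lemma arrival_index_le:
  assumes "\<And>k. 0 \<le> C k" "0 \<le> c" "K < (\<Sum>k\<le>N. C k)" "arrival c C n \<le> K"
  shows "n \<le> Suc N"
proof (rule ccontr)
  assume "\<not> n \<le> Suc N"
  then have "arrival c C (Suc N) \<le> arrival c C n" by (intro arrival_mono assms(1)) simp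
  moreover have "arrival c C (Suc N) = c + (\<Sum>k\<le>N. C k)" by (simp add: arrival_def lessThan_Suc_atMost)
  ultimately show False using assms(2-4) by simp
qed

lemma arrival_separated:
  assumes "\<And>k. 0 \<le> C k" "\<And>k. k \<le> N \<Longrightarrow> g < C k" "n \<noteq> m" "n \<le> Suc N" "m \<le> Suc N"
  shows "g \<le> \<bar>arrival c C n - arrival c C m\<bar>"
proof -
  have "g \<le> arrival c C j - arrival c C i" if "i < j" "j \<le> Suc N" for i j
    using arrival_gap[of C i j c] assms(1) assms(2)[of i] that by simp
  from this[of n m] this[of m n] assms(3-5) show ?thesis
    by (cases "n < m") (auto simp: abs_minus_commute intro: order_trans[OF _ abs_ge_self])
qed

lemma ppp_meets_window:
  fixes E :: "nat \<Rightarrow> real"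
  assumes E: "\<And>k. k \<le> N \<Longrightarrow> 0 \<le> E k \<and> E k \<le> \<delta>" and big: "K < (\<Sum>k\<le>N. E k)"
    and s: "0 \<le> s" "s \<le> K"
  shows "\<exists>m\<in>ppp E. s < m \<and> m \<le> s + \<delta>"
proof -
  define S where "S n = (\<Sum>k\<le>n. E k)" for n
  have ex: "\<exists>n. s < S n" using big s unfolding S_def by (intro exI[of _ N]) simp
  define n0 where "n0 = (LEAST n. s < S n)"
  have n0: "s < S n0" unfolding n0_def using LeastI_ex[OF ex] .
  have n0_le: "n0 \<le> N" unfolding n0_def using big s by (intro Least_le) (auto simp: S_def)
  have "S n0 \<le> s + \<delta>"
  proof (cases n0)
    case 0
    then show ?thesis using E[of 0] s by (simp add: S_def)
  next
    case (Suc n)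
    then have "S n \<le> s" unfolding n0_def using not_less_Least[of n "\<lambda>n. s < S n"] n0_def by auto
    moreover have "S n0 = S n + E n0" using Suc by (simp add: S_def)
    ultimately show ?thesis using E n0_le by force
  qed
  then show ?thesis using n0 unfolding S_def ppp_eq_range by auto
qed

lemma two_site_marks_arrivalI:
  fixes c :: "'s \<Rightarrow> real" and C :: "'s \<Rightarrow> nat \<Rightarrow> real"
  assumes ab: "a \<noteq> b" and \<delta>: "0 < \<delta>"
    and dense: "\<And>s. 0 \<le> s \<Longrightarrow> s \<le> K \<Longrightarrow> \<exists>m\<in>infm. s < m \<and> m \<le> s + \<delta>"
    and start: "\<And>u. u \<in> {a, b} \<Longrightarrow> \<delta> < c u"
    and gaps: "\<And>u k. 0 \<le> C u k" "\<And>u k. k \<le> N \<Longrightarrow> 2 * \<delta> < C u k"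
    and many: "\<And>u. K < (\<Sum>k\<le>N. C u k)"
    and cross: "\<And>n m. n \<le> Suc N \<Longrightarrow> m \<le> Suc N \<Longrightarrow> 2 * \<delta> \<le> \<bar>arrival (c a) (C a) n - arrival (c b) (C b) m\<bar>"
  shows "two_site_marks (\<lambda>u. range (arrival (c u) (C u))) infm a b \<delta> K"
proof
  have index_le: "n \<le> Suc N" if "u \<in> {a, b}" "arrival (c u) (C u) n \<le> K" for u n
    using arrival_index_le[OF gaps(1) _ many that(2)] start[OF that(1)] \<delta> by simp
  show "\<delta> < r" if w: "w \<in> {a, b}" and r: "r \<in> range (arrival (c w) (C w))" for w r
  proof -
    obtain n where "r = arrival (c w) (C w) n" using r by auto
    moreover have "c w \<le> arrival (c w) (C w) n" using gaps(1) by (rule arrival_ge_start)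
    ultimately show ?thesis using start[OF w] by simp
  qed
  show "2 * \<delta> \<le> \<bar>r - r'\<bar>"
    if w: "w \<in> {a, b}" "w' \<in> {a, b}" and r: "r \<in> range (arrival (c w) (C w))" "r' \<in> range (arrival (c w') (C w'))"
      and K: "r \<le> K" "r' \<le> K" and ne: "(w, r) \<noteq> (w', r')" for w w' r r'
  proof -
    obtain n m where n: "r = arrival (c w) (C w) n" and m: "r' = arrival (c w') (C w') m"
      using r by auto
    have nm: "n \<le> Suc N" "m \<le> Suc N" using index_le w K n m by auto
    show ?thesis
    proof (cases "w = w'")
      case True
      with ne n m have "n \<noteq> m" by auto
      from arrival_separated[where C = "C w" and c = "c w", OF gaps this nm]
      show ?thesis unfolding n m True .
    next
      case False
      then show ?thesis using cross nm n m w ab by (auto simp: abs_minus_commute)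
    qed
  qed
qed (fact ab \<delta> dense)+

lemma eta_survives:
  fixes \<omega> :: "idx \<Rightarrow> real" and x y :: site
  assumes xy: "x \<noteq> y" and \<delta>: "0 < \<delta>" "\<delta> \<le> h" and t: "0 \<le> t" "t \<le> K"
    and Xx: "2 * h < \<omega> (Xs x)" and Xxy: "\<omega> (Xo (x, y)) \<le> \<delta>" and Xy: "h < \<omega> (Xs y)"
    and gaps_nonneg: "\<forall>k. 0 \<le> \<omega> (Cs x k)" "\<forall>k. 0 \<le> \<omega> (Cs y k)"
    and gaps_x: "\<forall>k\<le>Nr. 2 * \<delta> < \<omega> (Cs x k)" "K < (\<Sum>k\<le>Nr. \<omega> (Cs x k))"
    and gaps_y: "\<forall>k\<le>Nr. 2 * \<delta> < \<omega> (Cs y k)" "K < (\<Sum>k\<le>Nr. \<omega> (Cs y k))"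
    and cross: "\<forall>n\<le>Suc Nr. \<forall>m\<le>Suc Nr. 2 * \<delta> \<le>
      \<bar>arrival (\<omega> (Xs x) - \<omega> (Xo (x, y))) (\<lambda>k. \<omega> (Cs x k)) n - arrival (\<omega> (Xs y)) (\<lambda>k. \<omega> (Cs y k)) m\<bar>"
    and endpoint: "\<forall>m\<le>Suc Nr. \<delta> \<le> \<bar>arrival (\<omega> (Xs y)) (\<lambda>k. \<omega> (Cs y k)) m - t\<bar>"
    and infection: "\<forall>k\<le>Ni. 0 \<le> \<omega> (Ce {x, y} k) \<and> \<omega> (Ce {x, y} k) \<le> \<delta>"
      "K < (\<Sum>k\<le>Ni. \<omega> (Ce {x, y} k))"
  shows "y \<in> eta \<omega> x y t"
proof -
  define c where "c u = (if u = x then \<omega> (Xs x) - \<omega> (Xo (x, y)) else \<omega> (Xs y))" for u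
  define C where "C u = (\<lambda>k. \<omega> (Cs (if u = x then x else y) k))" for u
  define infm where "infm = ppp (\<lambda>k. \<omega> (Ce {x, y} k))"
  interpret two_site_marks "\<lambda>u. range (arrival (c u) (C u))" infm x y \<delta> K
  proof (rule two_site_marks_arrivalI[OF xy \<delta>(1), where N = Nr])
    show "\<exists>m\<in>infm. s < m \<and> m \<le> s + \<delta>" if "0 \<le> s" "s \<le> K" for s
      unfolding infm_def using ppp_meets_window[OF _ infection(2) that] infection(1) by blast
  qed (use Xx Xy \<delta> Xxy xy gaps_nonneg gaps_x gaps_y cross in \<open>auto simp: c_def C_def\<close>)
  have "eta \<omega> x y t = infected t"
  proof -
    have "\<omega> (Xo (x, y)) < \<omega> (Xs x)" using Xx Xxy \<delta> by auto
    moreover have "(\<lambda>u. if u = x then {\<omega> (Xs x) - \<omega> (Xo (x, y))} \<union> (\<lambda>s. \<omega> (Xs x) - \<omega> (Xo (x, y)) + s) ` chi_s \<omega> x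
        else {\<omega> (Xs y)} \<union> (\<lambda>s. \<omega> (Xs y) + s) ` chi_s \<omega> y) = (\<lambda>u. range (arrival (c u) (C u)))"
      by (intro ext) (simp add: c_def C_def chi_s_def shifted_ppp_eq_range_arrival)
    ultimately show ?thesis unfolding eta_def infm_def chi_e_def by simp
  qed
  moreover have "\<not> recovers_in y (t - \<delta>) t"
  proof
    assume "recovers_in y (t - \<delta>) t"
    then obtain m where m: "t - \<delta> < arrival (c y) (C y) m" "arrival (c y) (C y) m \<le> t"
      by (auto simp: recovers_in_def)
    have "m \<le> Suc Nr"
      using arrival_index_le[of "C y" "c y" K Nr m] m t gaps_nonneg gaps_y Xy \<delta> xy by (simp add: c_def C_def)
    then show False using m endpoint xy by (force simp: c_def C_def)
  qed
  ultimately show ?thesis using survives[OF t] by simp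
qed

section \<open>Measurability of \<open>\<zeta>\<close>\<close>

abbreviation borel_coords :: "('i \<Rightarrow> real) measure" where
  "borel_coords \<equiv> PiM UNIV (\<lambda>_. borel)"

lemma sets_model: "sets (model p v lam) = sets borel_coords"
  unfolding model_def by (intro sets_PiM_cong) auto

lemma borel_measurable_coord: "(\<lambda>\<omega>. \<omega> i) \<in> borel_measurable borel_coords"
  by (rule measurable_component_singleton) simp

lemma borel_measurable_coord_sum: "(\<lambda>\<omega>. \<Sum>k\<le>n. \<omega> (f k)) \<in> borel_measurable borel_coords"
  by (intro borel_measurable_sum borel_measurable_coord)

lemma measurable_ind [measurable]: "Measurable.pred M P \<Longrightarrow> (\<lambda>\<omega>. ind (P \<omega>)) \<in> borel_measurable M"
  unfolding ind_def by measurable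

lemma ex_infection_path_range_iff:
  "(\<exists>ss. infection_path rec (range S) a b u s ss t w) \<longleftrightarrow>
   (\<exists>ns :: nat list. infection_path rec (range S) a b u s (map S ns) t w)"
proof
  assume "\<exists>ss. infection_path rec (range S) a b u s ss t w"
  then obtain ss where ss: "infection_path rec (range S) a b u s ss t w" by blast
  then have "set ss \<subseteq> range S" by (rule infection_path_marks_subset)
  then obtain ns where "ss = map S ns" by (metis ex_map_conv subsetD rangeE)
  then show "\<exists>ns. infection_path rec (range S) a b u s (map S ns) t w" using ss by auto
qed auto

lemma measurable_infection_path:
  fixes R :: "'a \<Rightarrow> 's \<Rightarrow> real set" and S :: "'a \<Rightarrow> nat \<Rightarrow> real"
  assumes avoid: "\<And>u f g. f \<in> borel_measurable M \<Longrightarrow> g \<in> borel_measurable M \<Longrightarrow>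
      Measurable.pred M (\<lambda>\<omega>. R \<omega> u \<inter> {f \<omega><..g \<omega>} = {})"
    and S: "\<And>n. (\<lambda>\<omega>. S \<omega> n) \<in> borel_measurable M"
    and t: "t \<in> borel_measurable M" and s: "s \<in> borel_measurable M"
  shows "Measurable.pred M
    (\<lambda>\<omega>. infection_path (R \<omega>) (range (S \<omega>)) a b u (s \<omega>) (map (S \<omega>) ns) (t \<omega>) w)"
  using s
proof (induction ns arbitrary: u s)
  case Nil
  note [measurable] = Nil t
  have "Measurable.pred M (\<lambda>\<omega>. R \<omega> u \<inter> {s \<omega><..t \<omega>} = {})" using avoid Nil t by blast
  then show ?case by (cases "u = w") auto
next
  case (Cons n ns)
  note [measurable] = Cons.prems S
  have "Measurable.pred M (\<lambda>\<omega>. R \<omega> u \<inter> {s \<omega><..S \<omega> n} = {})" using avoid Cons.prems S by blast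
  moreover have "Measurable.pred M (\<lambda>\<omega>. infection_path (R \<omega>) (range (S \<omega>)) a b (other a b u)
      (S \<omega> n) (map (S \<omega>) ns) (t \<omega>) w)"
    using Cons.IH S by blast
  ultimately show ?case by simp
qed

lemma pred_shifted_marks_avoid:
  fixes c :: "'a \<Rightarrow> real" and P :: "'a \<Rightarrow> nat \<Rightarrow> real"
  assumes [measurable]: "c \<in> borel_measurable M" "\<And>n. (\<lambda>\<omega>. P \<omega> n) \<in> borel_measurable M"
    "f \<in> borel_measurable M" "g \<in> borel_measurable M"
  shows "Measurable.pred M (\<lambda>\<omega>. ({c \<omega>} \<union> (\<lambda>s. c \<omega> + s) ` range (P \<omega>)) \<inter> {f \<omega><..g \<omega>} = {})"
proof -
  have "(({c \<omega>} \<union> (\<lambda>s. c \<omega> + s) ` range (P \<omega>)) \<inter> {f \<omega><..g \<omega>} = {}) \<longleftrightarrow>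
    \<not> (f \<omega> < c \<omega> \<and> c \<omega> \<le> g \<omega>) \<and> (\<forall>n. \<not> (f \<omega> < c \<omega> + P \<omega> n \<and> c \<omega> + P \<omega> n \<le> g \<omega>))" for \<omega>
    by (auto simp: disjoint_iff image_iff)
  then show ?thesis by simp
qed

lemma measurable_mem_eta:
  assumes t: "t \<in> borel_measurable borel_coords"
  shows "Measurable.pred borel_coords (\<lambda>\<omega>. y \<in> eta \<omega> x y (t \<omega>))"
proof -
  define cx where "cx \<omega> = \<omega> (Xs x) - \<omega> (Xo (x, y))" for \<omega> :: "idx \<Rightarrow> real"
  define R where "R \<omega> u = (if u = x then {cx \<omega>} \<union> (\<lambda>s. cx \<omega> + s) ` range (\<lambda>n. \<Sum>k\<le>n. \<omega> (Cs x k))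
                 else {\<omega> (Xs y)} \<union> (\<lambda>s. \<omega> (Xs y) + s) ` range (\<lambda>n. \<Sum>k\<le>n. \<omega> (Cs y k)))" for \<omega> u
  define S where "S \<omega> n = (\<Sum>k\<le>n. \<omega> (Ce {x, y} k))" for \<omega> :: "idx \<Rightarrow> real" and n
  have cx: "cx \<in> borel_measurable borel_coords"
    unfolding cx_def by (intro borel_measurable_diff borel_measurable_coord)
  have S: "(\<lambda>\<omega>. S \<omega> n) \<in> borel_measurable borel_coords" for n
    unfolding S_def by (rule borel_measurable_coord_sum)
  have avoid: "Measurable.pred borel_coords (\<lambda>\<omega>. R \<omega> u \<inter> {f \<omega><..g \<omega>} = {})"
    if "f \<in> borel_measurable borel_coords" "g \<in> borel_measurable borel_coords" for u f g
    using pred_shifted_marks_avoid[OF cx borel_measurable_coord_sum that]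
      pred_shifted_marks_avoid[OF borel_measurable_coord borel_measurable_coord_sum that]
    unfolding R_def by (cases "u = x") simp_all
  have "y \<in> eta \<omega> x y (t \<omega>) \<longleftrightarrow> \<omega> (Xo (x, y)) < \<omega> (Xs x) \<and>
     (\<exists>u\<in>{x, y}. \<exists>ns :: nat list.
        infection_path (R \<omega>) (range (S \<omega>)) x y u 0 (map (S \<omega>) ns) (t \<omega>) y)" for \<omega>
  proof -
    have "eta \<omega> x y (t \<omega>) =
        (if \<omega> (Xo (x, y)) < \<omega> (Xs x) then cp2 (R \<omega>) (range (S \<omega>)) x y (t \<omega>) else {})"
      unfolding eta_def R_def cx_def S_def chi_s_def chi_e_def ppp_eq_range by simp
    then show ?thesis unfolding cp2_def using ex_infection_path_range_iff[of "R \<omega>" "S \<omega>"] by auto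
  qed
  moreover have "Measurable.pred borel_coords (\<lambda>\<omega>. \<omega> (Xo (x, y)) < \<omega> (Xs x))"
    unfolding pred_def by (intro borel_measurable_less borel_measurable_coord)
  moreover have "Measurable.pred borel_coords (\<lambda>\<omega>. \<exists>u\<in>{x, y}. \<exists>ns :: nat list.
      infection_path (R \<omega>) (range (S \<omega>)) x y u 0 (map (S \<omega>) ns) (t \<omega>) y)"
    using measurable_infection_path[OF avoid S t measurable_const]
    by (intro pred_intros_finite pred_intros_countable) auto
  ultimately show ?thesis by (simp del: insert_iff)
qed

lemma borel_measurable_zeta: "(\<lambda>\<omega>. zeta \<omega> x y z) \<in> borel_measurable borel_coords"
proof -
  note [measurable] = measurable_mem_eta[OF borel_measurable_coord] borel_measurable_coord
  show ?thesis unfolding zeta_def Let_def by measurable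
qed

lemma sets_zeta_under_event:
  "{\<omega> \<in> space (model p v lam). zeta_under d \<omega> y z = 1} \<in> sets (model p v lam)"
proof -
  have "(\<lambda>\<omega>. zeta_under d \<omega> y z) \<in> borel_measurable borel_coords"
    unfolding zeta_under_def by (intro borel_measurable_prod borel_measurable_zeta)
  then have "{\<omega> \<in> space borel_coords. zeta_under d \<omega> y z = 1} \<in> sets borel_coords" by measurable
  moreover have "space (model p v lam) = space borel_coords" using sets_model by (rule sets_eq_imp_space_eq)
  ultimately show ?thesis using sets_model by metis
qed

section \<open>Independent exponential coordinates\<close>

lemma emeasure_exponential_ball_le:
  assumes l: "0 < l" and e: "0 \<le> \<epsilon>"
  shows "emeasure (density lborel (exponential_density l)) {x. \<bar>x - c\<bar> < \<epsilon>} \<le> ennreal (2 * \<epsilon> * l)"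
proof -
  have ball: "{x. \<bar>x - c\<bar> < \<epsilon>} = {c - \<epsilon><..<c + \<epsilon>}" by auto
  have "emeasure (density lborel (exponential_density l)) {c - \<epsilon><..<c + \<epsilon>} =
        (\<integral>\<^sup>+x. ennreal (exponential_density l x) * indicator {c - \<epsilon><..<c + \<epsilon>} x \<partial>lborel)"
    by (subst emeasure_density) (auto simp: mult.commute)
  also have "\<dots> \<le> (\<integral>\<^sup>+x. ennreal l * indicator {c - \<epsilon><..<c + \<epsilon>} x \<partial>lborel)"
    using l by (intro nn_integral_mono) (auto simp: indicator_def erlang_density_def intro!: ennreal_leI)
  also have "\<dots> = ennreal l * emeasure lborel {c - \<epsilon><..<c + \<epsilon>}"
    by (rule nn_integral_cmult_indicator) simp
  also have "\<dots> = ennreal (2 * \<epsilon> * l)"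
    using e l by (simp add: ennreal_mult[symmetric] mult.commute)
  finally show ?thesis unfolding ball .
qed

locale exponential_coords =
  fixes rt :: "'i \<Rightarrow> real"
  assumes rate_pos: "\<And>i. 0 < rt i"
begin

abbreviation law :: "'i \<Rightarrow> real measure" where
  "law i \<equiv> density lborel (exponential_density (rt i))"

abbreviation exp_product :: "('i \<Rightarrow> real) measure" where
  "exp_product \<equiv> PiM UNIV law"

lemma prob_space_law: "prob_space (law i)"
  by (rule prob_space_exponential_density[OF rate_pos])

sublocale Pr: product_prob_space law UNIV
  by (simp add: product_prob_space_def product_sigma_finite_def prob_space_law
      prob_space_imp_sigma_finite product_prob_space_axioms_def)

lemma sets_exp_product: "sets exp_product = sets borel_coords"
  by (intro sets_PiM_cong) auto

lemma space_exp_product: "space exp_product = UNIV"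
  by (simp add: space_PiM)

lemma measurable_exp_product: "f \<in> borel_measurable borel_coords \<Longrightarrow> f \<in> borel_measurable exp_product"
  using measurable_cong_sets[OF sets_exp_product refl] by blast

lemma events_Collect: "Measurable.pred borel_coords P \<Longrightarrow> {\<omega>. P \<omega>} \<in> Pr.events"
  unfolding pred_def using sets_exp_product by (simp add: space_PiM)

lemma prob_disj_le:
  assumes "Measurable.pred borel_coords A" "Measurable.pred borel_coords B"
    and "Pr.prob {\<omega>. A \<omega>} \<le> a" "Pr.prob {\<omega>. B \<omega>} \<le> b"
  shows "Pr.prob {\<omega>. A \<omega> \<or> B \<omega>} \<le> a + b"
proof -
  have "Pr.prob {\<omega>. A \<omega> \<or> B \<omega>} \<le> Pr.prob {\<omega>. A \<omega>} + Pr.prob {\<omega>. B \<omega>}"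
    using measure_Un_le[OF events_Collect[OF assms(1)] events_Collect[OF assms(2)]]
    by (simp add: Collect_disj_eq)
  with assms(3,4) show ?thesis by linarith
qed

lemma prob_bex_le:
  fixes c :: real
  assumes "finite I" "\<And>i. i \<in> I \<Longrightarrow> Measurable.pred borel_coords (B i)"
    and "\<And>i. i \<in> I \<Longrightarrow> Pr.prob {\<omega>. B i \<omega>} \<le> c"
  shows "Pr.prob {\<omega>. \<exists>i\<in>I. B i \<omega>} \<le> card I * c"
proof -
  have "{\<omega>. \<exists>i\<in>I. B i \<omega>} = (\<Union>i\<in>I. {\<omega>. B i \<omega>})" by blast
  also have "Pr.prob \<dots> \<le> (\<Sum>i\<in>I. Pr.prob {\<omega>. B i \<omega>})"
    using assms(1) events_Collect[OF assms(2)] by (intro Pr.finite_measure_subadditive_finite) blast+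
  also have "\<dots> \<le> (\<Sum>i\<in>I. c)" using assms(3) by (rule sum_mono)
  finally show ?thesis by simp
qed

lemma prob_mono_pred:
  "(\<And>\<omega>. A \<omega> \<Longrightarrow> B \<omega>) \<Longrightarrow> Measurable.pred borel_coords B \<Longrightarrow> Pr.prob {\<omega>. A \<omega>} \<le> Pr.prob {\<omega>. B \<omega>}"
  by (intro Pr.finite_measure_mono events_Collect) auto

lemma prob_coords_in:
  assumes "finite J" "\<And>i. i \<in> J \<Longrightarrow> A i \<in> sets borel"
  shows "Pr.prob {\<omega>. \<forall>i\<in>J. \<omega> i \<in> A i} = (\<Prod>i\<in>J. measure (law i) (A i))"
proof -
  have "emeasure exp_product {\<omega>\<in>space exp_product. \<forall>i\<in>J. \<omega> i \<in> A i} = (\<Prod>i\<in>J. emeasure (law i) (A i))"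
    using assms by (intro Pr.emeasure_PiM_Collect) auto
  then have "ennreal (Pr.prob {\<omega>. \<forall>i\<in>J. \<omega> i \<in> A i}) = (\<Prod>i\<in>J. ennreal (measure (law i) (A i)))"
    by (simp add: space_exp_product Pr.emeasure_eq_measure Pr.M.emeasure_eq_measure)
  then show ?thesis
    by (simp add: prod_ennreal measure_nonneg prod_nonneg)
qed

lemma prob_coord_in: "A \<in> sets borel \<Longrightarrow> Pr.prob {\<omega>. \<omega> i \<in> A} = measure (law i) A"
  using prob_coords_in[of "{i}" "\<lambda>_. A"] by simp

lemma measure_law_atMost: "0 \<le> a \<Longrightarrow> measure (law i) {..a} = 1 - exp (- rt i * a)"
  using emeasure_erlang_density[OF rate_pos, of 0 i a] rate_pos[of i]
  by (simp add: Pr.M.emeasure_eq_measure erlang_CDF_0)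

lemma measure_law_greaterThan: "0 \<le> a \<Longrightarrow> measure (law i) {a<..} = exp (- rt i * a)"
proof -
  have "{a<..} = UNIV - {..a}" by auto
  then have "measure (law i) {a<..} = 1 - measure (law i) {..a}"
    using Pr.M.prob_compl[of "{..a}" i] by simp
  then show "0 \<le> a \<Longrightarrow> ?thesis" using measure_law_atMost by simp
qed

lemma measure_law_Ioc:
  "0 \<le> a \<Longrightarrow> a \<le> b \<Longrightarrow> measure (law i) {a<..b} = exp (- rt i * a) - exp (- rt i * b)"
proof -
  have "a \<le> b \<Longrightarrow> {a<..b} = {..b} - {..a}" by auto
  then show "0 \<le> a \<Longrightarrow> a \<le> b \<Longrightarrow> ?thesis"
    using measure_law_atMost by (simp add: Pr.M.finite_measure_Diff)
qed

lemma prob_coord_gt: "0 \<le> a \<Longrightarrow> Pr.prob {\<omega>. a < \<omega> i} = exp (- rt i * a)"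
  using prob_coord_in[of "{a<..}" i] measure_law_greaterThan[of a i] by simp

lemma prob_coord_le: "0 \<le> a \<Longrightarrow> Pr.prob {\<omega>. \<omega> i \<le> a} = 1 - exp (- rt i * a)"
  using prob_coord_in[of "{..a}" i] measure_law_atMost[of a i] by simp

lemma AE_coord_nonneg: "AE \<omega> in exp_product. 0 \<le> \<omega> i"
proof -
  have "Pr.prob {\<omega>. \<omega> i < 0} \<le> Pr.prob {\<omega>. \<omega> i \<le> 0}" by (intro prob_mono_pred) auto
  then have "Pr.prob {\<omega>. \<omega> i < 0} = 0"
    using prob_coord_le[of 0 i] by (intro antisym measure_nonneg) simp_all
  moreover have "{\<omega>. \<omega> i < 0} \<in> Pr.events" by (intro events_Collect) measurable
  ultimately show ?thesis using Pr.prob_eq_0 by (auto simp: not_le)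
qed

lemma prob_coords_reindex:
  assumes J: "finite J" "inj_on f J" and B: "\<And>j. j \<in> J \<Longrightarrow> B j \<in> sets borel"
  shows "Pr.prob {\<omega>. \<forall>j\<in>J. \<omega> (f j) \<in> B j} = (\<Prod>j\<in>J. measure (law (f j)) (B j))"
proof -
  define B' where "B' i = B (the_inv_into J f i)" for i
  have "{\<omega>. \<forall>j\<in>J. \<omega> (f j) \<in> B j} = {\<omega>. \<forall>i\<in>f ` J. \<omega> i \<in> B' i}"
    using J by (auto simp: B'_def the_inv_into_f_f)
  moreover have "Pr.prob {\<omega>. \<forall>i\<in>f ` J. \<omega> i \<in> B' i} = (\<Prod>i\<in>f ` J. measure (law i) (B' i))"
    using J B by (intro prob_coords_in) (auto simp: B'_def the_inv_into_f_f)
  moreover have "(\<Prod>i\<in>f ` J. measure (law i) (B' i)) = (\<Prod>j\<in>J. measure (law (f j)) (B j))"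
    using J by (simp add: prod.reindex B'_def the_inv_into_f_f)
  ultimately show ?thesis by simp
qed

lemma indep_vars_coords:
  assumes inj: "inj_on f I"
  shows "Pr.indep_vars (\<lambda>_. borel) (\<lambda>k \<omega>. \<omega> (f k)) I"
  unfolding Pr.indep_vars_def2
proof (intro conjI ballI Pr.indep_setsI)
  fix i assume "i \<in> I"
  show "(\<lambda>\<omega>. \<omega> (f i)) \<in> borel_measurable exp_product"
    by (rule measurable_exp_product[OF borel_measurable_coord])
  then show "{(\<lambda>\<omega>. \<omega> (f i)) -` A \<inter> space exp_product |A. A \<in> sets borel} \<subseteq> Pr.events"
    using measurable_sets by blast
next
  fix A J assume J: "J \<noteq> {}" "J \<subseteq> I" "finite J"
    and A: "\<forall>j\<in>J. A j \<in> {(\<lambda>\<omega>. \<omega> (f j)) -` A \<inter> space exp_product |A. A \<in> sets borel}"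
  then obtain B where B: "\<And>j. j \<in> J \<Longrightarrow> A j = {\<omega>. \<omega> (f j) \<in> B j} \<and> B j \<in> sets borel"
    by (simp add: space_exp_product vimage_def) metis
  have "(\<Inter>j\<in>J. A j) = {\<omega>. \<forall>j\<in>J. \<omega> (f j) \<in> B j}" using B J(1) by auto
  then have "Pr.prob (\<Inter>j\<in>J. A j) = (\<Prod>j\<in>J. measure (law (f j)) (B j))"
    using prob_coords_reindex[OF J(3) inj_on_subset[OF inj J(2)]] B by simp
  also have "\<dots> = (\<Prod>j\<in>J. Pr.prob (A j))"
    using B by (simp add: prob_coord_in)
  finally show "Pr.prob (\<Inter>j\<in>J. A j) = (\<Prod>j\<in>J. Pr.prob (A j))" .
qed

lemma distributed_coord: "distributed exp_product lborel (\<lambda>\<omega>. \<omega> i) (exponential_density (rt i))"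
proof (rule erlang_distributedI[OF measurable_exp_product[OF borel_measurable_coord] rate_pos])
  fix a :: real assume a: "0 \<le> a"
  have "emeasure exp_product {x \<in> space exp_product. x i \<le> a} = ennreal (Pr.prob {x. x i \<le> a})"
    by (simp add: Pr.emeasure_eq_measure space_exp_product)
  then show "emeasure exp_product {x \<in> space exp_product. x i \<le> a} = ennreal (erlang_CDF 0 (rt i) a)"
    using prob_coord_le[OF a] a by (simp add: erlang_CDF_0)
qed

lemma prob_sum_coords_le:
  assumes inj: "inj f" and rate: "\<And>k. rt (f k) = l" and K: "0 \<le> K"
  shows "Pr.prob {\<omega>. (\<Sum>k\<le>n. \<omega> (f k)) \<le> K} = erlang_CDF n l K"
proof -
  have l: "0 < l" using rate_pos rate by metis
  have "distributed exp_product lborel (\<lambda>\<omega>. \<Sum>k\<in>{..n}. \<omega> (f k)) (erlang_density (card {..n} - 1) l)"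
  proof (rule Pr.exponential_distributed_sum)
    show "\<And>k. k \<in> {..n} \<Longrightarrow> distributed exp_product lborel (\<lambda>\<omega>. \<omega> (f k)) (exponential_density l)"
      using distributed_coord rate by metis
    show "Pr.indep_vars (\<lambda>i. borel) (\<lambda>k \<omega>. \<omega> (f k)) {..n}"
      using indep_vars_coords[of f "{..n}"] inj by (simp add: inj_on_subset)
  qed (auto simp: l)
  then have "\<P>(\<omega> in exp_product. (\<Sum>k\<in>{..n}. \<omega> (f k)) \<le> K) = erlang_CDF n l K"
    using Pr.erlang_distributed_le[OF _ l K] by simp
  then show ?thesis by (simp add: space_exp_product)
qed

lemma emeasure_exp_product_split:
  assumes S: "S \<in> sets exp_product"
  shows "emeasure exp_product S = (\<integral>\<^sup>+X. emeasure (law i) {x. X(i := x) \<in> S} \<partial>PiM (UNIV - {i}) law)"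
proof -
  define Rest where "Rest = PiM (UNIV - {i}) law"
  define g where "g = (\<lambda>(x :: real, X :: 'i \<Rightarrow> real). X(i := x))"
  interpret Rest: prob_space Rest unfolding Rest_def by (intro prob_space_PiM prob_space_law)
  interpret pair_sigma_finite "law i" Rest
    by (intro pair_sigma_finite.intro prob_space_imp_sigma_finite prob_space_law Rest.prob_space_axioms)
  have UNIV: "insert i (UNIV - {i}) = UNIV" "UNIV = (UNIV - {i}) \<union> {i}" by auto
  have distr_eq: "distr (law i \<Otimes>\<^sub>M Rest) exp_product g = exp_product"
    using distr_pair_PiM_eq_PiM[of "UNIV - {i}" law i] prob_space_law unfolding UNIV(1) Rest_def g_def by simp
  have g: "g \<in> measurable (law i \<Otimes>\<^sub>M Rest) exp_product"
    using measurable_fun_upd[OF UNIV(2), of snd "law i \<Otimes>\<^sub>M Rest" law fst] unfolding g_def Rest_def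
    by (simp add: case_prod_beta' measurable_cong_sets[OF refl sets_density])
  have "emeasure exp_product S = emeasure (law i \<Otimes>\<^sub>M Rest) (g -` S \<inter> space (law i \<Otimes>\<^sub>M Rest))"
    by (subst distr_eq[symmetric]) (rule emeasure_distr[OF g S])
  also have "\<dots> = (\<integral>\<^sup>+X. emeasure (law i) ((\<lambda>x. (x, X)) -` (g -` S \<inter> space (law i \<Otimes>\<^sub>M Rest))) \<partial>Rest)"
    by (rule emeasure_pair_measure_alt2[OF measurable_sets[OF g S]])
  also have "\<dots> = (\<integral>\<^sup>+X. emeasure (law i) {x. X(i := x) \<in> S} \<partial>Rest)"
    by (intro nn_integral_cong arg_cong2[where f = emeasure]) (auto simp: g_def space_pair_measure)
  finally show ?thesis unfolding Rest_def .
qed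

text \<open>Anti-concentration: conditionally on all other coordinates, \<open>\<omega> i\<close> has density at most
  \<open>rt i\<close>, so it falls into any window of width \<open>2\<epsilon>\<close> with probability at most \<open>2\<epsilon> rt i\<close>.\<close>

lemma prob_coord_near:
  assumes W: "W \<in> borel_measurable borel_coords" and W_indep: "\<And>\<omega> x. W (fun_upd \<omega> i x) = W \<omega>"
    and e: "0 \<le> \<epsilon>"
  shows "Pr.prob {\<omega>. \<bar>\<omega> i - W \<omega>\<bar> < \<epsilon>} \<le> 2 * \<epsilon> * rt i"
proof -
  define S where "S = {\<omega>. \<bar>\<omega> i - W \<omega>\<bar> < \<epsilon>}"
  have S: "S \<in> sets exp_product"
    unfolding S_def using W borel_measurable_coord[of i] by (intro events_Collect) measurable
  have "emeasure exp_product S = (\<integral>\<^sup>+X. emeasure (law i) {x. X(i := x) \<in> S} \<partial>PiM (UNIV - {i}) law)"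
    by (rule emeasure_exp_product_split[OF S])
  also have "\<dots> \<le> (\<integral>\<^sup>+X. ennreal (2 * \<epsilon> * rt i) \<partial>PiM (UNIV - {i}) law)"
  proof (rule nn_integral_mono)
    fix X
    have "{x. X(i := x) \<in> S} = {x. \<bar>x - W (X(i := 0))\<bar> < \<epsilon>}"
    proof (rule Collect_cong)
      fix x
      have "W (X(i := x)) = W (X(i := 0))" using W_indep[of "X(i := 0)" x] by simp
      then show "X(i := x) \<in> S \<longleftrightarrow> \<bar>x - W (X(i := 0))\<bar> < \<epsilon>" by (simp add: S_def)
    qed
    then show "emeasure (law i) {x. X(i := x) \<in> S} \<le> ennreal (2 * \<epsilon> * rt i)"
      using emeasure_exponential_ball_le[OF rate_pos e] by simp
  qed
  also have "\<dots> = ennreal (2 * \<epsilon> * rt i)"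
  proof -
    have "prob_space (PiM (UNIV - {i}) law)" by (intro prob_space_PiM prob_space_law)
    then show ?thesis by (simp add: prob_space.emeasure_space_1)
  qed
  finally show ?thesis
    unfolding S_def using e rate_pos[of i] by (simp add: Pr.emeasure_eq_measure)
qed

end

section \<open>Lower bound for a fixed edge\<close>

lemma nbrs_ne: "x \<in> nbrs d y \<Longrightarrow> x \<noteq> y"
  by (auto simp: nbrs_def)

lemma nbrs_subset_offsets:
  "nbrs d y \<subseteq> (\<lambda>ds. map2 (+) y ds) ` {ds. set ds \<subseteq> {-1, 0, 1} \<and> length ds = d}"
proof
  fix w assume "w \<in> nbrs d y"
  then have len: "length w = d" "length y = d" and sum: "(\<Sum>i<d. \<bar>y ! i - w ! i\<bar>) = 1"
    by (auto simp: nbrs_def)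
  define ds where "ds = map2 (-) w y"
  have "\<bar>y ! i - w ! i\<bar> \<le> 1" if "i < d" for i
    using member_le_sum[of i "{..<d}" "\<lambda>i. \<bar>y ! i - w ! i\<bar>"] that sum by simp
  then have "ds ! i \<in> {-1, 0, 1}" if "i < d" for i
    using that len unfolding ds_def by (fastforce simp: abs_le_iff)
  then have "set ds \<subseteq> {-1, 0, 1}"
    using len unfolding ds_def by (metis in_set_conv_nth length_map length_zip min.idem subsetI)
  moreover have "length ds = d" using len by (simp add: ds_def)
  moreover have "map2 (+) y ds = w" using len by (intro nth_equalityI) (auto simp: ds_def)
  ultimately show "w \<in> (\<lambda>ds. map2 (+) y ds) ` {ds. set ds \<subseteq> {-1, 0, 1} \<and> length ds = d}" by blast
qed

lemma finite_nbrs_card_le: "finite (nbrs d y) \<and> card (nbrs d y) \<le> 3 ^ d"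
proof -
  let ?S = "{ds :: int list. set ds \<subseteq> {-1, 0, 1} \<and> length ds = d}"
  have fin: "finite ?S" by (rule finite_lists_length_eq) simp
  have "card ?S = 3 ^ d" by (subst card_lists_length_eq) (auto simp: numeral_3_eq_3)
  then have "card ((\<lambda>ds. map2 (+) y ds) ` ?S) \<le> 3 ^ d" using card_image_le[OF fin] by simp
  then show ?thesis using nbrs_subset_offsets[of d y] fin by (meson card_mono finite_imageI finite_subset le_trans)
qed

definition early_weight :: "real \<Rightarrow> real \<Rightarrow> nat \<Rightarrow> real" where
  "early_weight a h j = (exp (- a * (real j * h)) - exp (- a * ((real j + 1) * h))) * exp (- ((real j + 3) * h))"

definition late_weight :: "real \<Rightarrow> real \<Rightarrow> real \<Rightarrow> nat \<Rightarrow> real" where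
  "late_weight a b h j = (exp (- h) - exp (- (real j * h))) *
     (exp (- a * (real j * h)) - exp (- a * ((real j + 1) * h))) * exp (- b * ((real j + 2) * h))"

definition failure_bound :: "real \<Rightarrow> real \<Rightarrow> real \<Rightarrow> real \<Rightarrow> real \<Rightarrow> real \<Rightarrow> nat \<Rightarrow> nat \<Rightarrow> real \<Rightarrow> real" where
  "failure_bound D a c h \<delta> K Nr Ni lam =
     exp (- lam * \<delta>) + (1 - exp (- c * h)) + (1 - exp (- h))
     + D * exp (- lam * \<delta>) + D * (1 - exp (- (2 * h)))
     + (D + 1) * (real Nr + 1) * (1 - exp (- (2 * \<delta>))) + (D + 1) * erlang_CDF Nr 1 K
     + D * (real Ni + 1) * exp (- lam * \<delta>) + D * erlang_CDF Ni lam K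
     + D * (real Nr + 2)^2 * (4 * \<delta>) + (real Nr + 2) * (2 * \<delta> * a)"

lemma failure_bound_mono:
  assumes "D \<le> D'" "0 \<le> h" "0 \<le> \<delta>" "0 < lam"
  shows "failure_bound D a c h \<delta> K Nr Ni lam \<le> failure_bound D' a c h \<delta> K Nr Ni lam"
proof -
  define A where "A = exp (- lam * \<delta>) + (1 - exp (- c * h)) + (1 - exp (- h))
      + (real Nr + 1) * (1 - exp (- (2 * \<delta>))) + erlang_CDF Nr 1 K + (real Nr + 2) * (2 * \<delta> * a)"
  define B where "B = exp (- lam * \<delta>) + (1 - exp (- (2 * h))) + (real Nr + 1) * (1 - exp (- (2 * \<delta>)))
      + erlang_CDF Nr 1 K + (real Ni + 1) * exp (- lam * \<delta>) + erlang_CDF Ni lam K + (real Nr + 2)^2 * (4 * \<delta>)"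
  have "failure_bound D a c h \<delta> K Nr Ni lam = A + D * B" "failure_bound D' a c h \<delta> K Nr Ni lam = A + D' * B"
    unfolding failure_bound_def A_def B_def by (simp_all add: algebra_simps)
  moreover have "0 \<le> B" unfolding B_def using assms(2-4) by (intro add_nonneg_nonneg mult_nonneg_nonneg) auto
  ultimately show ?thesis using assms(1) by (simp add: mult_right_mono)
qed

locale zeta_model =
  fixes p v lam :: real and d :: nat and y z :: site
  assumes p_pos: "0 < p" and p_lt_1: "p < 1" and v_pos: "0 < v" and lam_pos: "0 < lam"
begin

sublocale exponential_coords "rate p v lam"
proof
  show "0 < rate p v lam i" for i
    using p_pos p_lt_1 v_pos lam_pos by (cases i) auto
qed

lemma model_eq: "model p v lam = exp_product"
  unfolding model_def ..

definition Nb :: "site set" where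
  "Nb = nbrs d y - {z}"

lemma finite_Nb: "finite Nb"
  unfolding Nb_def using finite_nbrs_card_le by auto

lemma card_Nb_le: "card Nb \<le> 3 ^ d"
  unfolding Nb_def using finite_nbrs_card_le[of d y] card_Diff1_le[of "nbrs d y" z] by linarith

lemma Nb_ne: "x \<in> Nb \<Longrightarrow> x \<noteq> y"
  unfolding Nb_def using nbrs_ne by auto

lemma zeta_under_eq_1I: "(\<And>x. x \<in> Nb \<Longrightarrow> zeta \<omega> x y z = 1) \<Longrightarrow> zeta_under d \<omega> y z = 1"
  unfolding zeta_under_def Nb_def[symmetric] by simp

text \<open>The two ways of realising \<open>\<zeta> = 1\<close>, discretised at mesh \<open>h\<close>: in the early event
  \<open>T\<^sup>+\<^sub>y\<^sub>z\<close> rings well before \<open>X\<^sub>y\<close>; in the late event it rings after \<open>X\<^sub>y\<close> but before every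
  \<open>T\<^sup>-\<^sub>x\<^sub>y\<close>.\<close>

definition early :: "real \<Rightarrow> nat \<Rightarrow> (idx \<Rightarrow> real) set" where
  "early h j = {\<omega>. \<omega> (Tp {y, z}) \<in> {real j * h<..(real j + 1) * h} \<and> \<omega> (Xs y) \<in> {(real j + 3) * h<..}}"

definition late :: "real \<Rightarrow> nat \<Rightarrow> (idx \<Rightarrow> real) set" where
  "late h j = {\<omega>. \<omega> (Xs y) \<in> {h<..real j * h} \<and> \<omega> (Tp {y, z}) \<in> {real j * h<..(real j + 1) * h} \<and>
                  (\<forall>x\<in>Nb. \<omega> (Tm {x, y}) \<in> {(real j + 2) * h<..})}"

definition good :: "real \<Rightarrow> real \<Rightarrow> real \<Rightarrow> nat \<Rightarrow> nat \<Rightarrow> (idx \<Rightarrow> real) \<Rightarrow> bool" where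
  "good h \<delta> K Nr Ni \<omega> \<longleftrightarrow>
     \<omega> (Xo (y, z)) \<le> \<delta> \<and> h < \<omega> (Tm {y, z}) \<and> h < \<omega> (Xs' y) \<and>
     (\<forall>x\<in>Nb. \<omega> (Xo (x, y)) \<le> \<delta>) \<and> (\<forall>x\<in>Nb. 2 * h < \<omega> (Xs x)) \<and>
     (\<forall>w\<in>insert y Nb. \<forall>k. 0 \<le> \<omega> (Cs w k)) \<and> (\<forall>x\<in>Nb. \<forall>k. 0 \<le> \<omega> (Ce {x, y} k)) \<and>
     (\<forall>w\<in>insert y Nb. \<forall>k\<le>Nr. 2 * \<delta> < \<omega> (Cs w k)) \<and>
     (\<forall>w\<in>insert y Nb. K < (\<Sum>k\<le>Nr. \<omega> (Cs w k))) \<and>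
     (\<forall>x\<in>Nb. \<forall>k\<le>Ni. \<omega> (Ce {x, y} k) \<le> \<delta>) \<and>
     (\<forall>x\<in>Nb. K < (\<Sum>k\<le>Ni. \<omega> (Ce {x, y} k))) \<and>
     (\<forall>x\<in>Nb. \<forall>n\<le>Suc Nr. \<forall>m\<le>Suc Nr. 2 * \<delta> \<le>
        \<bar>arrival (\<omega> (Xs x) - \<omega> (Xo (x, y))) (\<lambda>k. \<omega> (Cs x k)) n - arrival (\<omega> (Xs y)) (\<lambda>k. \<omega> (Cs y k)) m\<bar>) \<and>
     (\<forall>m\<le>Suc Nr. \<delta> \<le> \<bar>arrival (\<omega> (Xs y)) (\<lambda>k. \<omega> (Cs y k)) m - \<omega> (Tp {y, z})\<bar>)"

lemma zeta_under_early:
  assumes "0 < h" "\<delta> \<le> h" "\<omega> \<in> early h j" "good h \<delta> K Nr Ni \<omega>"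
  shows "zeta_under d \<omega> y z = 1"
proof (rule zeta_under_eq_1I)
  fix x
  have "\<omega> (Tp {y, z}) + 2 * h < \<omega> (Xs y)" using assms(3) unfolding early_def by (auto simp: algebra_simps)
  moreover have "\<omega> (Xo (y, z)) \<le> \<delta>" "h < \<omega> (Tm {y, z})" using assms(4) unfolding good_def by auto
  ultimately show "zeta \<omega> x y z = 1" using assms(1,2) unfolding zeta_def Let_def ind_def by auto
qed

lemma zeta_under_late:
  assumes h: "0 < h" and \<delta>: "0 < \<delta>" "\<delta> \<le> h" and j: "j < J" and K: "K = real J * h"
    and late: "\<omega> \<in> late h j" and good: "good h \<delta> K Nr Ni \<omega>"
  shows "zeta_under d \<omega> y z = 1"
proof (rule zeta_under_eq_1I)
  fix x assume x: "x \<in> Nb"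
  let ?t = "\<omega> (Tp {y, z})"
  have L: "h < \<omega> (Xs y)" "\<omega> (Xs y) \<le> real j * h" "real j * h < ?t" "?t \<le> (real j + 1) * h"
    "(real j + 2) * h < \<omega> (Tm {x, y})"
    using late x unfolding late_def by auto
  have "(real j + 1) * h \<le> K" unfolding K using j h by (intro mult_right_mono) auto
  then have t: "0 \<le> ?t" "?t \<le> K" using L h by auto
  have G: "\<omega> (Xo (x, y)) \<le> \<delta>" "\<omega> (Xo (y, z)) \<le> \<delta>" "h < \<omega> (Tm {y, z})" "h < \<omega> (Xs' y)"
    using good x unfolding good_def by auto
  have "y \<in> eta \<omega> x y ?t"
    by (rule eta_survives[OF Nb_ne[OF x] \<delta> t _ G(1) L(1)]) (use good x in \<open>auto simp: good_def\<close>)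
  moreover have "?t < \<omega> (Tm {x, y}) - \<omega> (Xo (x, y))" using L G(1) \<delta>(2) by (simp add: algebra_simps)
  ultimately show "zeta \<omega> x y z = 1" using L G \<delta>(2) unfolding zeta_def Let_def ind_def by auto
qed

end

lemma mesh_index_unique:
  fixes h t :: real
  assumes "0 < h" "real j * h < t" "t \<le> (real j + 1) * h" "real j' * h < t" "t \<le> (real j' + 1) * h"
  shows "j = j'"
proof -
  have "\<not> (real i + 1) * h \<le> real i' * h \<or> \<not> (real i' * h < t \<and> t \<le> (real i + 1) * h)" for i i' by auto
  moreover have "(real i + 1) * h \<le> real i' * h" if "i < i'" for i i'
    using that assms(1) by (intro mult_right_mono) auto
  ultimately show ?thesis using assms(2-5) by (metis linorder_neqE_nat)
qed

context zeta_model
begin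

lemma prob_early: "0 < h \<Longrightarrow> Pr.prob (early h j) = early_weight (v * p) h j"
proof -
  assume h: "0 < h"
  define A where "A i = (if i = Tp {y, z} then {real j * h<..(real j + 1) * h} else {(real j + 3) * h<..})" for i
  have "early h j = {\<omega>. \<forall>i\<in>{Tp {y, z}, Xs y}. \<omega> i \<in> A i}" unfolding early_def A_def by auto
  then have "Pr.prob (early h j) = (\<Prod>i\<in>{Tp {y, z}, Xs y}. measure (law i) (A i))"
    by (simp only:) (rule prob_coords_in, auto simp: A_def)
  moreover have "0 \<le> real j * h" "real j * h \<le> (real j + 1) * h" "0 \<le> (real j + 3) * h" using h by auto
  ultimately show ?thesis
    using measure_law_Ioc[of "real j * h" "(real j + 1) * h" "Tp {y, z}"]
      measure_law_greaterThan[of "(real j + 3) * h" "Xs y"]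
    by (simp add: A_def early_weight_def)
qed

lemma prob_late:
  assumes h: "0 < h" and j: "1 \<le> j"
  shows "Pr.prob (late h j) = (exp (- h) - exp (- (real j * h))) *
    (exp (- (v * p) * (real j * h)) - exp (- (v * p) * ((real j + 1) * h))) *
    exp (- (v * (1 - p)) * card Nb * ((real j + 2) * h))"
proof -
  define T where "T = (\<lambda>x. Tm {x, y}) ` Nb"
  define A where "A i = (if i = Xs y then {h<..real j * h} else if i = Tp {y, z} then
      {real j * h<..(real j + 1) * h} else {(real j + 2) * h<..})" for i
  have inj: "inj_on (\<lambda>x. Tm {x, y}) Nb" using Nb_ne by (auto intro!: inj_onI simp: doubleton_eq_iff)
  have fin: "finite T" unfolding T_def using finite_Nb by simp
  have "late h j = {\<omega>. \<forall>i\<in>{Xs y, Tp {y, z}} \<union> T. \<omega> i \<in> A i}"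
    unfolding late_def A_def T_def by auto
  then have "Pr.prob (late h j) = (\<Prod>i\<in>{Xs y, Tp {y, z}} \<union> T. measure (law i) (A i))"
    using fin by (simp only:) (rule prob_coords_in, auto simp: A_def)
  also have "\<dots> = measure (law (Xs y)) {h<..real j * h} *
      (measure (law (Tp {y, z})) {real j * h<..(real j + 1) * h} * (\<Prod>i\<in>T. measure (law i) (A i)))"
    using fin by (simp add: A_def T_def image_iff)
  also have "(\<Prod>i\<in>T. measure (law i) (A i)) = (\<Prod>x\<in>Nb. exp (- (v * (1 - p)) * ((real j + 2) * h)))"
    unfolding T_def using inj h measure_law_greaterThan[of "(real j + 2) * h" "Tm {_, y}"]
    by (simp add: prod.reindex A_def)
  also have "\<dots> = exp (- (v * (1 - p)) * card Nb * ((real j + 2) * h))"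
    by (simp add: exp_of_nat_mult[symmetric])
  finally show ?thesis
    using h j measure_law_Ioc[of h "real j * h" "Xs y"] measure_law_Ioc[of "real j * h" "(real j + 1) * h" "Tp {y, z}"]
    by (simp add: mult_right_mono mult.assoc)
qed

lemma late_weight_le_prob_late:
  assumes h: "0 < h" and D: "real (card Nb) \<le> D"
  shows "late_weight (v * p) (v * (1 - p) * D) h j \<le> Pr.prob (late h j)"
proof (cases "j = 0")
  case True
  then have "late_weight (v * p) (v * (1 - p) * D) h j \<le> 0"
    using h p_pos v_pos by (simp add: late_weight_def mult_nonpos_nonneg)
  then show ?thesis by (rule order_trans[OF _ measure_nonneg])
next
  case False
  have "v * (1 - p) * ((real j + 2) * h) * card Nb \<le> v * (1 - p) * ((real j + 2) * h) * D"
    using D v_pos p_lt_1 h by (intro mult_left_mono) auto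
  then have "exp (- (v * (1 - p) * D) * ((real j + 2) * h)) \<le> exp (- (v * (1 - p)) * card Nb * ((real j + 2) * h))"
    by (simp add: algebra_simps)
  moreover have "0 \<le> exp (- h) - exp (- (real j * h))" using False h by (simp add: mult_le_cancel_right1)
  moreover have "0 \<le> exp (- (v * p) * (real j * h)) - exp (- (v * p) * ((real j + 1) * h))"
    using h p_pos v_pos by simp
  ultimately show ?thesis
    using prob_late[OF h, of j] False unfolding late_weight_def by (simp add: mult_left_mono)
qed

lemma y_notin_Nb: "y \<notin> Nb"
  using Nb_ne by blast

lemma prob_gap_negative:
  "Pr.prob {\<omega>. (\<exists>w\<in>insert y Nb. \<exists>k. \<omega> (Cs w k) < 0) \<or> (\<exists>x\<in>Nb. \<exists>k. \<omega> (Ce {x, y} k) < 0)} = 0"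
  (is "Pr.prob ?N = 0")
proof -
  have "AE \<omega> in exp_product. (\<forall>w\<in>insert y Nb. \<forall>k. 0 \<le> \<omega> (Cs w k)) \<and> (\<forall>x\<in>Nb. \<forall>k. 0 \<le> \<omega> (Ce {x, y} k))"
    using finite_Nb AE_coord_nonneg by (auto simp: AE_ball_countable AE_all_countable intro: countable_finite)
  then have "AE \<omega> in exp_product. \<omega> \<notin> ?N"
    by (rule eventually_mono) (auto simp: not_less)
  moreover have "?N \<in> Pr.events" by (rule events_Collect) measurable
  ultimately show ?thesis using Pr.prob_eq_0 by blast
qed

lemma prob_short_recovery_gap:
  "0 \<le> \<delta> \<Longrightarrow> Pr.prob {\<omega>. \<exists>(w, k)\<in>insert y Nb \<times> {..Nr}. \<omega> (Cs w k) \<le> 2 * \<delta>}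
     \<le> (card Nb + 1) * (Nr + 1) * (1 - exp (- (2 * \<delta>)))"
  using prob_bex_le[of "insert y Nb \<times> {..Nr}" "\<lambda>(w, k) \<omega>. \<omega> (Cs w k) \<le> 2 * \<delta>" "1 - exp (- (2 * \<delta>))"]
    finite_Nb y_notin_Nb
  by (simp add: case_prod_beta' prob_coord_le card_cartesian_product)

lemma prob_few_recoveries:
  "0 \<le> K \<Longrightarrow> Pr.prob {\<omega>. \<exists>w\<in>insert y Nb. (\<Sum>k\<le>Nr. \<omega> (Cs w k)) \<le> K} \<le> (card Nb + 1) * erlang_CDF Nr 1 K"
  using prob_bex_le[of "insert y Nb" "\<lambda>w \<omega>. (\<Sum>k\<le>Nr. \<omega> (Cs w k)) \<le> K" "erlang_CDF Nr 1 K"]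
    prob_sum_coords_le[of "Cs _" 1 K Nr] finite_Nb y_notin_Nb
  by (simp add: inj_def)

lemma prob_long_infection_gap:
  "0 \<le> \<delta> \<Longrightarrow> Pr.prob {\<omega>. \<exists>(x, k)\<in>Nb \<times> {..Ni}. \<delta> < \<omega> (Ce {x, y} k)} \<le> card Nb * (Ni + 1) * exp (- lam * \<delta>)"
  using prob_bex_le[of "Nb \<times> {..Ni}" "\<lambda>(x, k) \<omega>. \<delta> < \<omega> (Ce {x, y} k)" "exp (- lam * \<delta>)"] finite_Nb
  by (simp add: case_prod_beta' prob_coord_gt card_cartesian_product)

lemma prob_few_infections:
  "0 \<le> K \<Longrightarrow> Pr.prob {\<omega>. \<exists>x\<in>Nb. (\<Sum>k\<le>Ni. \<omega> (Ce {x, y} k)) \<le> K} \<le> card Nb * erlang_CDF Ni lam K"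
  using prob_bex_le[of Nb "\<lambda>x \<omega>. (\<Sum>k\<le>Ni. \<omega> (Ce {x, y} k)) \<le> K" "erlang_CDF Ni lam K"]
    prob_sum_coords_le[of "Ce {_, y}" lam K Ni] finite_Nb
  by (simp add: inj_def)

lemma prob_recoveries_close:
  assumes "0 \<le> \<delta>"
  shows "Pr.prob {\<omega>. \<exists>(x, n, m)\<in>Nb \<times> {..Suc Nr} \<times> {..Suc Nr}.
     \<bar>arrival (\<omega> (Xs x) - \<omega> (Xo (x, y))) (\<lambda>k. \<omega> (Cs x k)) n - arrival (\<omega> (Xs y)) (\<lambda>k. \<omega> (Cs y k)) m\<bar> < 2 * \<delta>}
     \<le> card Nb * (real Nr + 2)^2 * (4 * \<delta>)"
proof -
  define close where "close = (\<lambda>(x, n, m) \<omega>. \<bar>arrival (\<omega> (Xs x) - \<omega> (Xo (x, y))) (\<lambda>k. \<omega> (Cs x k)) n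
      - arrival (\<omega> (Xs y)) (\<lambda>k. \<omega> (Cs y k)) m\<bar> < 2 * \<delta>)"
  have "Pr.prob {\<omega>. \<exists>i\<in>Nb \<times> {..Suc Nr} \<times> {..Suc Nr}. close i \<omega>} \<le> card (Nb \<times> {..Suc Nr} \<times> {..Suc Nr}) * (4 * \<delta>)"
  proof (rule prob_bex_le)
    fix i assume "i \<in> Nb \<times> {..Suc Nr} \<times> {..Suc Nr}"
    then obtain x n m where i: "i = (x, n, m)" and x: "x \<in> Nb" by auto
    show "Measurable.pred borel_coords (close i)" unfolding i close_def arrival_def prod.case by measurable
    define W where "W \<omega> = \<omega> (Xo (x, y)) - (\<Sum>k<n. \<omega> (Cs x k)) + arrival (\<omega> (Xs y)) (\<lambda>k. \<omega> (Cs y k)) m"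
      for \<omega> :: "idx \<Rightarrow> real"
    have "W \<in> borel_measurable borel_coords" unfolding W_def arrival_def by measurable
    moreover have "W (fun_upd \<omega> (Xs x) t) = W \<omega>" for \<omega> t
      using Nb_ne[OF x] unfolding W_def arrival_def by simp
    ultimately have "Pr.prob {\<omega>. \<bar>\<omega> (Xs x) - W \<omega>\<bar> < 2 * \<delta>} \<le> 2 * (2 * \<delta>) * rate p v lam (Xs x)"
      using assms by (intro prob_coord_near) auto
    moreover have "{\<omega>. close i \<omega>} = {\<omega>. \<bar>\<omega> (Xs x) - W \<omega>\<bar> < 2 * \<delta>}"
      unfolding i close_def W_def arrival_def by (auto simp: algebra_simps)
    ultimately show "Pr.prob {\<omega>. close i \<omega>} \<le> 4 * \<delta>" by simp
  qed (use finite_Nb in simp)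
  moreover have "real (card (Nb \<times> {..Suc Nr} \<times> {..Suc Nr})) = card Nb * (real Nr + 2)^2"
    by (simp add: card_cartesian_product power2_eq_square algebra_simps)
  ultimately show ?thesis by (simp add: close_def case_prod_beta')
qed

lemma prob_recovery_near_Tp:
  assumes "0 \<le> \<delta>"
  shows "Pr.prob {\<omega>. \<exists>m\<in>{..Suc Nr}. \<bar>arrival (\<omega> (Xs y)) (\<lambda>k. \<omega> (Cs y k)) m - \<omega> (Tp {y, z})\<bar> < \<delta>}
     \<le> (real Nr + 2) * (2 * \<delta> * (v * p))"
proof -
  have "Pr.prob {\<omega>. \<bar>arrival (\<omega> (Xs y)) (\<lambda>k. \<omega> (Cs y k)) m - \<omega> (Tp {y, z})\<bar> < \<delta>} \<le> 2 * \<delta> * (v * p)" for m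
  proof -
    define W where "W \<omega> = arrival (\<omega> (Xs y)) (\<lambda>k. \<omega> (Cs y k)) m" for \<omega> :: "idx \<Rightarrow> real"
    have "W \<in> borel_measurable borel_coords" unfolding W_def arrival_def by measurable
    moreover have "W (fun_upd \<omega> (Tp {y, z}) t) = W \<omega>" for \<omega> t unfolding W_def arrival_def by simp
    ultimately have "Pr.prob {\<omega>. \<bar>\<omega> (Tp {y, z}) - W \<omega>\<bar> < \<delta>} \<le> 2 * \<delta> * rate p v lam (Tp {y, z})"
      using assms by (intro prob_coord_near)
    then show ?thesis unfolding W_def by (simp add: abs_minus_commute)
  qed
  then show ?thesis
    using prob_bex_le[of "{..Suc Nr}" "\<lambda>m \<omega>. \<bar>arrival (\<omega> (Xs y)) (\<lambda>k. \<omega> (Cs y k)) m - \<omega> (Tp {y, z})\<bar> < \<delta>"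
      "2 * \<delta> * (v * p)"]
    by (simp add: arrival_def add.commute)
qed

lemma prob_not_good_le:
  assumes h: "0 < h" and \<delta>: "0 < \<delta>" and K: "0 \<le> K"
  shows "Pr.prob {\<omega>. \<not> good h \<delta> K Nr Ni \<omega>} \<le> failure_bound (card Nb) (v * p) (v * (1 - p)) h \<delta> K Nr Ni lam"
proof -
  have simple: "Pr.prob {\<omega>. \<delta> < \<omega> (Xo (y, z))} \<le> exp (- lam * \<delta>)"
    "Pr.prob {\<omega>. \<omega> (Tm {y, z}) \<le> h} \<le> 1 - exp (- (v * (1 - p)) * h)"
    "Pr.prob {\<omega>. \<omega> (Xs' y) \<le> h} \<le> 1 - exp (- h)"
    "Pr.prob {\<omega>. \<exists>x\<in>Nb. \<delta> < \<omega> (Xo (x, y))} \<le> card Nb * exp (- lam * \<delta>)"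
    "Pr.prob {\<omega>. \<exists>x\<in>Nb. \<omega> (Xs x) \<le> 2 * h} \<le> card Nb * (1 - exp (- (2 * h)))"
    using h \<delta> finite_Nb by (auto simp: prob_coord_gt prob_coord_le intro!: prob_bex_le)
  let ?cross = "\<lambda>\<omega> x n m. \<bar>arrival (\<omega> (Xs x) - \<omega> (Xo (x, y))) (\<lambda>k. \<omega> (Cs x k)) n
      - arrival (\<omega> (Xs y)) (\<lambda>k. \<omega> (Cs y k)) m\<bar>"
  let ?end = "\<lambda>\<omega> m. \<bar>arrival (\<omega> (Xs y)) (\<lambda>k. \<omega> (Cs y k)) m - \<omega> (Tp {y, z})\<bar>"
  have "Pr.prob {\<omega>. \<not> good h \<delta> K Nr Ni \<omega>} \<le> Pr.prob {\<omega>.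
      \<delta> < \<omega> (Xo (y, z)) \<or> \<omega> (Tm {y, z}) \<le> h \<or> \<omega> (Xs' y) \<le> h \<or>
      (\<exists>x\<in>Nb. \<delta> < \<omega> (Xo (x, y))) \<or> (\<exists>x\<in>Nb. \<omega> (Xs x) \<le> 2 * h) \<or>
      ((\<exists>w\<in>insert y Nb. \<exists>k. \<omega> (Cs w k) < 0) \<or> (\<exists>x\<in>Nb. \<exists>k. \<omega> (Ce {x, y} k) < 0)) \<or>
      (\<exists>(w, k)\<in>insert y Nb \<times> {..Nr}. \<omega> (Cs w k) \<le> 2 * \<delta>) \<or>
      (\<exists>w\<in>insert y Nb. (\<Sum>k\<le>Nr. \<omega> (Cs w k)) \<le> K) \<or>
      (\<exists>(x, k)\<in>Nb \<times> {..Ni}. \<delta> < \<omega> (Ce {x, y} k)) \<or>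
      (\<exists>x\<in>Nb. (\<Sum>k\<le>Ni. \<omega> (Ce {x, y} k)) \<le> K) \<or>
      (\<exists>(x, n, m)\<in>Nb \<times> {..Suc Nr} \<times> {..Suc Nr}. ?cross \<omega> x n m < 2 * \<delta>) \<or>
      (\<exists>m\<in>{..Suc Nr}. ?end \<omega> m < \<delta>)}" (is "_ \<le> Pr.prob {\<omega>. ?bad \<omega>}")
  proof (rule prob_mono_pred)
    show "?bad \<omega>" if "\<not> good h \<delta> K Nr Ni \<omega>" for \<omega>
      using that by (auto simp: good_def not_le not_less)
    show "Measurable.pred borel_coords ?bad"
      unfolding Bex_def arrival_def by (intro pred_intros_logic; measurable)
  qed
  also have "\<dots> \<le> exp (- lam * \<delta>) + ((1 - exp (- (v * (1 - p)) * h)) + ((1 - exp (- h)) +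
      (card Nb * exp (- lam * \<delta>) + (card Nb * (1 - exp (- (2 * h))) + (0 +
      ((card Nb + 1) * (Nr + 1) * (1 - exp (- (2 * \<delta>))) + ((card Nb + 1) * erlang_CDF Nr 1 K +
      (card Nb * (Ni + 1) * exp (- lam * \<delta>) + (card Nb * erlang_CDF Ni lam K +
      (card Nb * (real Nr + 2)^2 * (4 * \<delta>) + (real Nr + 2) * (2 * \<delta> * (v * p))))))))))))"
    using \<delta> K simple
    by (intro prob_disj_le simple prob_gap_negative[THEN eq_refl] prob_short_recovery_gap
        prob_few_recoveries prob_long_infection_gap prob_few_infections prob_recoveries_close
        prob_recovery_near_Tp; (unfold Bex_def arrival_def)?; (measurable | simp))
  also have "\<dots> = failure_bound (card Nb) (v * p) (v * (1 - p)) h \<delta> K Nr Ni lam"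
    unfolding failure_bound_def by (simp add: algebra_simps)
  finally show ?thesis .
qed

lemma events_early: "early h j \<in> Pr.events"
  unfolding early_def by (rule events_Collect) measurable

lemma events_late: "late h j \<in> Pr.events"
  unfolding late_def by (rule events_Collect) measurable

lemma prob_early_or_late:
  assumes h: "0 < h"
  shows "Pr.prob ((\<Union>j<J. early h j) \<union> (\<Union>j<J. late h j)) =
    (\<Sum>j<J. Pr.prob (early h j)) + (\<Sum>j<J. Pr.prob (late h j))"
proof -
  have ev: "early h j \<in> Pr.events" "late h j \<in> Pr.events" for j
    using events_early events_late .
  have "disjoint_family_on (early h) {..<J}" "disjoint_family_on (late h) {..<J}"
    unfolding disjoint_family_on_def early_def late_def using mesh_index_unique[OF h] by fastforce+
  then have "Pr.prob (\<Union>j<J. early h j) = (\<Sum>j<J. Pr.prob (early h j))"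
    "Pr.prob (\<Union>j<J. late h j) = (\<Sum>j<J. Pr.prob (late h j))"
    using ev by (auto intro!: Pr.finite_measure_finite_Union)
  moreover have "(\<Union>j<J. early h j) \<inter> (\<Union>j<J. late h j) = {}"
  proof -
    have early: "\<omega> (Tp {y, z}) < \<omega> (Xs y)" if "\<omega> \<in> early h j" for \<omega> j
    proof -
      have "(real j + 1) * h < (real j + 3) * h" using h by (intro mult_strict_right_mono) auto
      then show ?thesis using that unfolding early_def by auto
    qed
    have late: "\<omega> (Xs y) < \<omega> (Tp {y, z})" if "\<omega> \<in> late h j" for \<omega> j
      using that unfolding late_def by auto
    show ?thesis by (blast dest: early late less_asym)
  qed
  ultimately show ?thesis using ev by (simp add: Pr.finite_measure_Union)
qed

lemma measure_zeta_under_ge: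
  assumes h: "0 < h" and \<delta>: "0 < \<delta>" "\<delta> \<le> h" and D: "real (card Nb) \<le> D"
  shows "(\<Sum>j<J. early_weight (v * p) h j) + (\<Sum>j<J. late_weight (v * p) (v * (1 - p) * D) h j)
      - failure_bound D (v * p) (v * (1 - p)) h \<delta> (real J * h) Nr Ni lam
    \<le> measure (model p v lam) {\<omega> \<in> space (model p v lam). zeta_under d \<omega> y z = 1}"
proof -
  define K where "K = real J * h"
  define T where "T = {\<omega>. zeta_under d \<omega> y z = 1}"
  define C where "C = (\<Union>j<J. early h j) \<union> (\<Union>j<J. late h j)"
  define G where "G = {\<omega>. good h \<delta> K Nr Ni \<omega>}"
  have T: "T \<in> Pr.events" and measure_T: "measure (model p v lam) {\<omega> \<in> space (model p v lam). zeta_under d \<omega> y z = 1} = Pr.prob T"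
    using sets_zeta_under_event[of p v lam d y z] unfolding model_eq T_def by (simp_all add: space_exp_product)
  have G: "G \<in> Pr.events" unfolding G_def good_def arrival_def by (rule events_Collect) measurable
  have "C \<inter> G \<subseteq> T"
    using zeta_under_early[OF h \<delta>(2)] zeta_under_late[OF h \<delta> _ K_def] unfolding C_def G_def T_def by blast
  then have "C \<subseteq> T \<union> (space exp_product - G)" by (auto simp: space_exp_product)
  then have "Pr.prob C \<le> Pr.prob T + Pr.prob (space exp_product - G)"
    using T G by (intro order_trans[OF Pr.finite_measure_mono measure_Un_le]) auto
  moreover have "Pr.prob (space exp_product - G) \<le> failure_bound D (v * p) (v * (1 - p)) h \<delta> K Nr Ni lam"
  proof -
    have "space exp_product - G = {\<omega>. \<not> good h \<delta> K Nr Ni \<omega>}" unfolding G_def by (auto simp: space_exp_product)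
    moreover have "0 \<le> K" unfolding K_def using h by simp
    ultimately show ?thesis
      using order_trans[OF prob_not_good_le[OF h \<delta>(1)] failure_bound_mono[OF D]] h \<delta>(1) lam_pos by simp
  qed
  moreover have "(\<Sum>j<J. early_weight (v * p) h j) + (\<Sum>j<J. late_weight (v * p) (v * (1 - p) * D) h j) \<le> Pr.prob C"
    unfolding C_def prob_early_or_late[OF h]
    using prob_early[OF h] late_weight_le_prob_late[OF h D] by (simp add: sum_mono)
  ultimately show ?thesis unfolding measure_T K_def by linarith
qed

end

section \<open>Choice of the parameters\<close>

text \<open>The Erlang distribution with \<open>k + 1\<close> phases of rate \<open>l\<close> has mean \<open>(k + 1) / l\<close>.\<close>

lemma erlang_CDF_le_Chebyshev:
  fixes l K :: real
  assumes l: "0 < l" and K: "0 \<le> K" "2 * K \<le> (real k + 1) / l"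
  shows "erlang_CDF k l K \<le> 4 / (real k + 1)"
proof -
  define D where "D = density lborel (erlang_density k l)"
  define \<mu> where "\<mu> = (real k + 1) / l"
  interpret prob_space D unfolding D_def by (rule prob_space_erlang_density[OF l])
  have atMost: "{x \<in> space D. x \<le> a} = {..a}" for a unfolding D_def by auto
  have dist: "distributed D lborel (\<lambda>x. x) (erlang_density k l)"
  proof (rule erlang_distributedI[OF _ l])
    show "(\<lambda>x. x) \<in> borel_measurable D" unfolding D_def by simp
    show "emeasure D {x \<in> space D. x \<le> a} = ennreal (erlang_CDF k l a)" if "0 \<le> a" for a
      unfolding atMost unfolding D_def by (rule emeasure_erlang_density[OF l])
  qed
  have "expectation (\<lambda>x. x) = fact (k + 1) / (fact k * l)"
    using erlang_ith_moment[OF l dist, of 1] by simp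
  also have "\<dots> = \<mu>" unfolding \<mu>_def using l by (simp add: fact_Suc field_simps)
  finally have mean: "expectation (\<lambda>x. x) = \<mu>" .
  have var: "variance (\<lambda>x. x) = (real k + 1) / l\<^sup>2"
    using erlang_distributed_variance[OF l dist] by simp
  have \<mu>: "0 < \<mu>" "\<mu> / 2 \<le> \<mu> - K" using l K unfolding \<mu>_def by auto
  have "emeasure D {..K} = ennreal (erlang_CDF k l K)"
    unfolding D_def by (rule emeasure_erlang_density[OF l])
  then have "erlang_CDF k l K = prob {x \<in> space D. x \<le> K}"
    unfolding atMost using erlang_CDF_nonneg[OF l] by (simp add: emeasure_eq_measure)
  also have "\<dots> \<le> prob {x \<in> space D. \<mu> - K \<le> \<bar>x - expectation (\<lambda>x. x)\<bar>}"
    using mean by (intro finite_measure_mono) (auto simp: D_def)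
  also have "\<dots> \<le> variance (\<lambda>x. x) / (\<mu> - K)\<^sup>2"
    using erlang_ith_moment_integrable[OF l dist, of 2] \<mu> by (intro Chebyshev_inequality) (auto simp: D_def)
  also have "\<dots> \<le> variance (\<lambda>x. x) / (\<mu> / 2)\<^sup>2"
    using \<mu> var l by (intro divide_left_mono power_mono) (auto simp: power2_eq_square)
  also have "\<dots> = 4 / (real k + 1)"
  proof -
    have "(c / l\<^sup>2) / ((c / l) / 2)\<^sup>2 = 4 / c" if "0 < c" for c :: real
      using that l by (simp add: power2_eq_square field_simps)
    from this[of "real k + 1"] show ?thesis unfolding var \<mu>_def by simp
  qed
  finally show ?thesis .
qed

lemma erlang_CDF_tendsto_0:
  assumes l: "0 < l" and K: "0 \<le> K"
  shows "(\<lambda>k. erlang_CDF k l K) \<longlonglongrightarrow> 0"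
proof (rule tendsto_sandwich)
  show "eventually (\<lambda>k. 0 \<le> erlang_CDF k l K) sequentially" using l by simp
  have "eventually (\<lambda>k. 2 * K \<le> (real k + 1) / l) sequentially" using l by real_asymp
  then show "eventually (\<lambda>k. erlang_CDF k l K \<le> 4 / (real k + 1)) sequentially"
    by eventually_elim (rule erlang_CDF_le_Chebyshev[OF l K])
  show "(\<lambda>k. 4 / (real k + 1)) \<longlonglongrightarrow> 0" by real_asymp
qed simp

lemma erlang_CDF_ceiling_le:
  assumes "0 < lam" "0 < K"
  shows "erlang_CDF (nat \<lceil>2 * lam * K\<rceil>) lam K \<le> 2 / (lam * K)"
proof -
  define N where "N = nat \<lceil>2 * lam * K\<rceil>"
  have N: "2 * lam * K \<le> real N" unfolding N_def by (rule real_nat_ceiling_ge)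
  have "2 * K \<le> (real N + 1) / lam" using N assms by (simp add: field_simps)
  then have "erlang_CDF N lam K \<le> 4 / (real N + 1)"
    using assms by (intro erlang_CDF_le_Chebyshev) auto
  also have "\<dots> \<le> 4 / (2 * lam * K)" using N assms by (intro divide_left_mono) auto
  finally show ?thesis unfolding N_def by (simp add: mult.commute)
qed

definition early_total :: "real \<Rightarrow> real \<Rightarrow> real" where
  "early_total a h = (1 - exp (- a * h)) * exp (- 3 * h) / (1 - exp (- (a + 1) * h))"

definition late_total :: "real \<Rightarrow> real \<Rightarrow> real \<Rightarrow> real" where
  "late_total a b h = (1 - exp (- a * h)) * exp (- 2 * b * h) *
     (exp (- h) / (1 - exp (- (a + b) * h)) - 1 / (1 - exp (- (a + b + 1) * h)))"

lemma early_weight_sums: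
  assumes "0 < a" "0 < h"
  shows "early_weight a h sums early_total a h"
proof -
  have "norm (exp (- (a + 1) * h)) < 1" using assms by (simp add: mult_neg_pos)
  then have "(\<lambda>j. (1 - exp (- a * h)) * exp (- 3 * h) * exp (- (a + 1) * h) ^ j) sums
      ((1 - exp (- a * h)) * exp (- 3 * h) * (1 / (1 - exp (- (a + 1) * h))))"
    by (intro sums_mult geometric_sums)
  moreover have "early_weight a h = (\<lambda>j. (1 - exp (- a * h)) * exp (- 3 * h) * exp (- (a + 1) * h) ^ j)"
    unfolding early_weight_def by (intro ext) (simp add: exp_of_nat_mult[symmetric] exp_add[symmetric] algebra_simps)
  ultimately show ?thesis unfolding early_total_def by simp
qed

lemma late_weight_sums:
  assumes "0 < a" "0 \<le> b" "0 < h"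
  shows "late_weight a b h sums late_total a b h"
proof -
  have "norm (exp (- (a + b) * h)) < 1" "norm (exp (- (a + b + 1) * h)) < 1"
    using assms by (simp_all add: mult_neg_pos)
  then have "(\<lambda>j. (1 - exp (- a * h)) * exp (- 2 * b * h) *
        (exp (- h) * exp (- (a + b) * h) ^ j - exp (- (a + b + 1) * h) ^ j)) sums
      ((1 - exp (- a * h)) * exp (- 2 * b * h) *
        (exp (- h) * (1 / (1 - exp (- (a + b) * h))) - 1 / (1 - exp (- (a + b + 1) * h))))"
    by (intro sums_mult sums_diff geometric_sums)
  moreover have "late_weight a b h = (\<lambda>j. (1 - exp (- a * h)) * exp (- 2 * b * h) *
      (exp (- h) * exp (- (a + b) * h) ^ j - exp (- (a + b + 1) * h) ^ j))"
    unfolding late_weight_def by (intro ext) (simp add: exp_of_nat_mult[symmetric] exp_add[symmetric] algebra_simps)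
  ultimately show ?thesis unfolding late_total_def by simp
qed

definition mesh_failure :: "real \<Rightarrow> real \<Rightarrow> real \<Rightarrow> real" where
  "mesh_failure D c h = (1 - exp (- c * h)) + (1 - exp (- h)) + D * (1 - exp (- (2 * h)))"

definition success_limit :: "real \<Rightarrow> real \<Rightarrow> real" where
  "success_limit a b = a / (a + 1) + (a / (a + b) - a / (a + b + 1))"

lemma totals_tendsto_success_limit:
  assumes "0 < a" "0 < b" "0 < c"
  shows "((\<lambda>h. early_total a h + late_total a b h - mesh_failure D c h) \<longlongrightarrow> success_limit a b) (at_right 0)"
  unfolding early_total_def late_total_def mesh_failure_def success_limit_def
  using assms by (real_asymp simp: field_simps)

lemma exists_mesh:
  assumes "0 < a" "0 < b" "0 < c" "0 < \<epsilon>"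
  obtains h J where "0 < h" "1 \<le> J" "success_limit a b - \<epsilon> <
    (\<Sum>j<J. early_weight a h j) + (\<Sum>j<J. late_weight a b h j) - mesh_failure D c h"
proof -
  have "eventually (\<lambda>h. success_limit a b - \<epsilon> / 2 < early_total a h + late_total a b h - mesh_failure D c h)
      (at_right 0)"
    using assms(4) by (intro order_tendstoD(1)[OF totals_tendsto_success_limit[OF assms(1-3)]]) simp
  moreover have "eventually (\<lambda>h. 0 < h) (at_right (0 :: real))" by (rule eventually_at_right_less)
  ultimately have "eventually (\<lambda>h. 0 < h \<and> success_limit a b - \<epsilon> / 2 <
      early_total a h + late_total a b h - mesh_failure D c h) (at_right 0)"
    by eventually_elim auto
  then obtain h where h: "0 < h" "success_limit a b - \<epsilon> / 2 < early_total a h + late_total a b h - mesh_failure D c h"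
    using eventually_happens'[OF trivial_limit_at_right_real] by blast
  have "(\<lambda>J. (\<Sum>j<J. early_weight a h j) + (\<Sum>j<J. late_weight a b h j)) \<longlonglongrightarrow> early_total a h + late_total a b h"
    using early_weight_sums[OF assms(1) h(1)] late_weight_sums[OF assms(1) _ h(1)] assms(2)
    unfolding sums_def by (intro tendsto_add) auto
  then have "eventually (\<lambda>J. early_total a h + late_total a b h - \<epsilon> / 2 <
      (\<Sum>j<J. early_weight a h j) + (\<Sum>j<J. late_weight a b h j)) sequentially"
    using assms(4) by (intro order_tendstoD(1)) auto
  then have "eventually (\<lambda>J. 1 \<le> J \<and> early_total a h + late_total a b h - \<epsilon> / 2 <
      (\<Sum>j<J. early_weight a h j) + (\<Sum>j<J. late_weight a b h j)) sequentially"
    using eventually_ge_at_top[of 1] by eventually_elim auto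
  then obtain J where "1 \<le> J" "early_total a h + late_total a b h - \<epsilon> / 2 <
      (\<Sum>j<J. early_weight a h j) + (\<Sum>j<J. late_weight a b h j)"
    using eventually_happens'[OF sequentially_bot] by blast
  with h show ?thesis using that by fastforce
qed

lemma failure_bound_le_split:
  assumes lam: "0 < lam" and K: "0 < K" and D: "0 \<le> D"
  shows "failure_bound D a c h \<delta> K Nr (nat \<lceil>2 * lam * K\<rceil>) lam \<le> mesh_failure D c h
    + (D + 1) * erlang_CDF Nr 1 K
    + ((D + 1) * (real Nr + 1) * (1 - exp (- (2 * \<delta>))) + D * (real Nr + 2)^2 * (4 * \<delta>) + (real Nr + 2) * (2 * \<delta> * a))
    + ((1 + D) * exp (- lam * \<delta>) + D * (2 * lam * K + 2) * exp (- lam * \<delta>) + D * (2 / (lam * K)))"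
proof -
  define Ni where "Ni = nat \<lceil>2 * lam * K\<rceil>"
  have "real Ni = of_int \<lceil>2 * lam * K\<rceil>" unfolding Ni_def using lam K by simp
  then have "real Ni \<le> 2 * lam * K + 1" using of_int_ceiling_le_add_one[of "2 * lam * K"] by simp
  then have "D * (real Ni + 1) * exp (- lam * \<delta>) \<le> D * (2 * lam * K + 2) * exp (- lam * \<delta>)"
    using D by (intro mult_right_mono mult_left_mono) auto
  moreover have "D * erlang_CDF Ni lam K \<le> D * (2 / (lam * K))"
    unfolding Ni_def using erlang_CDF_ceiling_le[OF lam K] D by (rule mult_left_mono)
  ultimately show ?thesis
    unfolding Ni_def[symmetric] failure_bound_def mesh_failure_def by (simp add: algebra_simps)
qed

lemma exists_small_failure:
  assumes h: "0 < h" and K: "0 < K" and \<epsilon>: "0 < \<epsilon>" and D: "0 \<le> D" and a: "0 < a"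
  obtains \<delta> lam0 Nr where "0 < \<delta>" "\<delta> \<le> h" "0 < lam0"
    "\<And>lam. lam0 \<le> lam \<Longrightarrow> failure_bound D a c h \<delta> K Nr (nat \<lceil>2 * lam * K\<rceil>) lam < mesh_failure D c h + \<epsilon>"
proof -
  have "(\<lambda>k. (D + 1) * erlang_CDF k 1 K) \<longlonglongrightarrow> (D + 1) * 0"
    using erlang_CDF_tendsto_0[of 1 K] K by (intro tendsto_mult_left) auto
  then obtain Nr where Nr: "(D + 1) * erlang_CDF Nr 1 K < \<epsilon> / 3"
    using order_tendstoD(2)[of _ 0 sequentially "\<epsilon> / 3"] \<epsilon> eventually_happens'[OF sequentially_bot] by force
  define F where "F \<delta> = (D + 1) * (real Nr + 1) * (1 - exp (- (2 * \<delta>))) + D * (real Nr + 2)^2 * (4 * \<delta>)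
      + (real Nr + 2) * (2 * \<delta> * a)" for \<delta>
  have "(F \<longlongrightarrow> 0) (at_right 0)" unfolding F_def by real_asymp
  then have "eventually (\<lambda>\<delta>. F \<delta> < \<epsilon> / 3) (at_right 0)" using \<epsilon> by (intro order_tendstoD(2)) auto
  then obtain b where b: "0 < b" "\<And>\<delta>. 0 < \<delta> \<Longrightarrow> \<delta> < b \<Longrightarrow> F \<delta> < \<epsilon> / 3"
    unfolding eventually_at_right_field by blast
  define \<delta> where "\<delta> = min (b / 2) h"
  have \<delta>: "0 < \<delta>" "\<delta> \<le> h" "F \<delta> < \<epsilon> / 3" using b h unfolding \<delta>_def by auto
  define H where "H lam = (1 + D) * exp (- lam * \<delta>) + D * (2 * lam * K + 2) * exp (- lam * \<delta>) + D * (2 / (lam * K))"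
    for lam
  have "(H \<longlongrightarrow> 0) at_top" unfolding H_def using \<delta> K by real_asymp
  then have "eventually (\<lambda>lam. H lam < \<epsilon> / 3) at_top" using \<epsilon> by (intro order_tendstoD(2)) auto
  then have "eventually (\<lambda>lam. 0 < lam \<and> H lam < \<epsilon> / 3) at_top"
    using eventually_gt_at_top[of 0] by eventually_elim auto
  then obtain lam0 where lam0: "\<And>lam. lam0 \<le> lam \<Longrightarrow> 0 < lam \<and> H lam < \<epsilon> / 3"
    unfolding eventually_at_top_linorder by blast
  have "failure_bound D a c h \<delta> K Nr (nat \<lceil>2 * lam * K\<rceil>) lam < mesh_failure D c h + \<epsilon>" if "lam0 \<le> lam" for lam
    using failure_bound_le_split[OF _ K D, of lam a c h \<delta> Nr] lam0[OF that] \<delta>(3) Nr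
    unfolding F_def H_def by linarith
  moreover have "0 < lam0" using lam0[of lam0] by simp
  ultimately show ?thesis using that \<delta>(1,2) by blast
qed

lemma exists_parameters:
  assumes a: "0 < a" and c: "0 < c" and D: "1 \<le> D" and r: "r < success_limit a (c * D)"
  obtains h \<delta> lam0 J Nr where "0 < h" "0 < \<delta>" "\<delta> \<le> h" "0 < lam0"
    "\<And>lam. lam0 \<le> lam \<Longrightarrow> r \<le> (\<Sum>j<J. early_weight a h j) + (\<Sum>j<J. late_weight a (c * D) h j)
        - failure_bound D a c h \<delta> (real J * h) Nr (nat \<lceil>2 * lam * (real J * h)\<rceil>) lam"
proof -
  define \<epsilon> where "\<epsilon> = (success_limit a (c * D) - r) / 2"
  have \<epsilon>: "0 < \<epsilon>" using r unfolding \<epsilon>_def by simp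
  have b: "0 < c * D" and D0: "0 \<le> D" using c D by simp_all
  obtain h J where h: "0 < h" "1 \<le> J" and mesh: "success_limit a (c * D) - \<epsilon> <
      (\<Sum>j<J. early_weight a h j) + (\<Sum>j<J. late_weight a (c * D) h j) - mesh_failure D c h"
    by (rule exists_mesh[OF a b c \<epsilon>])
  have K: "0 < real J * h" using h by simp
  obtain \<delta> lam0 Nr where \<delta>: "0 < \<delta>" "\<delta> \<le> h" and lam0: "0 < lam0" and small: "\<And>lam. lam0 \<le> lam \<Longrightarrow>
      failure_bound D a c h \<delta> (real J * h) Nr (nat \<lceil>2 * lam * (real J * h)\<rceil>) lam < mesh_failure D c h + \<epsilon>"
    using exists_small_failure[OF h(1) K \<epsilon> D0 a, where c = c] by blast
  have r_eq: "r = success_limit a (c * D) - 2 * \<epsilon>" unfolding \<epsilon>_def by (simp add: field_simps)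
  have "r \<le> (\<Sum>j<J. early_weight a h j) + (\<Sum>j<J. late_weight a (c * D) h j)
      - failure_bound D a c h \<delta> (real J * h) Nr (nat \<lceil>2 * lam * (real J * h)\<rceil>) lam" if "lam0 \<le> lam" for lam
    using small[OF that] mesh r_eq by linarith
  then show ?thesis by (rule that[OF h(1) \<delta> lam0])
qed

lemma three_pow_le: "2 \<le> d \<Longrightarrow> (3 :: nat) ^ d \<le> 2 ^ (2 * d - 1) * (2 * d - 1)"
proof (induction d rule: dec_induct)
  case (step n)
  have "(3 :: nat) ^ Suc n \<le> 4 * (2 ^ (2 * n - 1) * (2 * n - 1))" using step.IH by simp
  also have "\<dots> = 2 ^ (2 * Suc n - 1) * (2 * n - 1)"
  proof -
    have "2 * Suc n - 1 = (2 * n - 1) + 2" using step.hyps by simp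
    then have "(2 :: nat) ^ (2 * Suc n - 1) = 2 ^ (2 * n - 1) * 4" by (simp only: power_add) simp
    then show ?thesis by simp
  qed
  also have "\<dots> \<le> 2 ^ (2 * Suc n - 1) * (2 * Suc n - 1)" by (intro mult_left_mono) auto
  finally show ?case .
qed simp

lemma threshold_le_success_limit:
  assumes d: "2 \<le> d" and p: "0 < p" "p < 1" and v: "0 < v"
  shows "1 / 2 ^ (2 * d - 1) * (p / (1 + (2 * real d - 2) * (1 - p))) \<le> success_limit (v * p) (v * (1 - p) * 3 ^ d)"
proof -
  define D :: real where "D = 3 ^ d"
  have "real (3 ^ d) \<le> real (2 ^ (2 * d - 1) * (2 * d - 1))"
    using three_pow_le[OF d] by (simp only: of_nat_le_iff)
  then have "D \<le> 2 ^ (2 * d - 1) * (2 * real d - 1)" using d unfolding D_def by (simp add: of_nat_diff)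
  then have "(1 - p) * D \<le> (1 - p) * (2 ^ (2 * d - 1) * (2 * real d - 1))"
    using p by (intro mult_left_mono) auto
  moreover have "p \<le> 2 ^ (2 * d - 1) * p" using p by simp
  moreover have "2 ^ (2 * d - 1) * (1 + (2 * real d - 2) * (1 - p))
      = 2 ^ (2 * d - 1) * p + (1 - p) * (2 ^ (2 * d - 1) * (2 * real d - 1))"
    by (simp add: algebra_simps)
  ultimately have "p + (1 - p) * D \<le> 2 ^ (2 * d - 1) * (1 + (2 * real d - 2) * (1 - p))" by linarith
  moreover have "0 < p + (1 - p) * D" using p unfolding D_def by (simp add: add_pos_nonneg)
  ultimately have "p / (2 ^ (2 * d - 1) * (1 + (2 * real d - 2) * (1 - p))) \<le> p / (p + (1 - p) * D)"
    using p by (intro frac_le) auto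
  then have "1 / 2 ^ (2 * d - 1) * (p / (1 + (2 * real d - 2) * (1 - p))) \<le> p / (p + (1 - p) * D)"
    by simp
  also have "\<dots> = v * p / (v * (p + (1 - p) * D))" using v by simp
  also have "\<dots> = v * p / (v * p + v * (1 - p) * D)" by (simp add: algebra_simps)
  also have "\<dots> \<le> success_limit (v * p) (v * (1 - p) * D)"
  proof -
    have "v * p / (v * p + v * (1 - p) * D + 1) \<le> v * p / (v * p + 1)"
      using p v unfolding D_def by (intro divide_left_mono mult_pos_pos add_pos_nonneg) auto
    then show ?thesis unfolding success_limit_def by simp
  qed
  finally show ?thesis unfolding D_def .
qed

theorem lemma1:
  fixes d :: nat and p v r :: real
  assumes "d \<ge> 2" and "0 < p" and "p < 1" and "0 < v" and "0 < r"
    and "r < 1 / 2 ^ (2 * d - 1) * (p / (1 + (2 * real d - 2) * (1 - p)))"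
  shows "\<exists>lam0 > 0. \<forall>lam \<ge> lam0. \<forall>(y, z) \<in> Es d.
           measure (model p v lam) {\<omega> \<in> space (model p v lam). zeta_under d \<omega> y z = 1} \<ge> r"
proof -
  have a: "0 < v * p" and c: "0 < v * (1 - p)" and D: "(1 :: real) \<le> 3 ^ d" using assms(2-4) by simp_all
  have "r < success_limit (v * p) (v * (1 - p) * 3 ^ d)"
    using assms(6) threshold_le_success_limit[OF assms(1-4)] by linarith
  then obtain h \<delta> lam0 J Nr where par: "0 < h" "0 < \<delta>" "\<delta> \<le> h" "0 < lam0"
    and r: "\<And>lam. lam0 \<le> lam \<Longrightarrow> r \<le> (\<Sum>j<J. early_weight (v * p) h j)
      + (\<Sum>j<J. late_weight (v * p) (v * (1 - p) * 3 ^ d) h j)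
      - failure_bound (3 ^ d) (v * p) (v * (1 - p)) h \<delta> (real J * h) Nr (nat \<lceil>2 * lam * (real J * h)\<rceil>) lam"
    using exists_parameters[OF a c D] by blast
  have bound: "r \<le> measure (model p v lam) {\<omega> \<in> space (model p v lam). zeta_under d \<omega> y z = 1}"
    if "lam0 \<le> lam" for lam y z
  proof -
    interpret zeta_model p v lam d y z
      using assms(2-4) par(4) that by unfold_locales auto
    have "real (card Nb) \<le> 3 ^ d" using card_Nb_le by (metis of_nat_le_iff of_nat_numeral of_nat_power)
    from measure_zeta_under_ge[OF par(1-3) this, where J = J and Nr = Nr and Ni = "nat \<lceil>2 * lam * (real J * h)\<rceil>"]
    show ?thesis using r[OF that] by linarith
  qed
  show ?thesis
  proof (intro exI[of _ lam0] conjI allI impI ballI)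
    fix lam yz assume "lam0 \<le> lam"
    then show "case yz of (y, z) \<Rightarrow> r \<le> measure (model p v lam) {\<omega> \<in> space (model p v lam). zeta_under d \<omega> y z = 1}"
      using bound by (simp split: prod.split)
  qed (fact par(4))
qed

end
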